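(* Let $D_1\subset\mathbb{R}^2$ be an open disc centered at the origin, let $\boldsymbol{\gamma}_1,\dots,\boldsymbol{\gamma}_m$ be distinct unit vectors in $\mathbb{R}^2$ and $c_1,\dots,c_m$ nonzero reals. The vector-valued star transform $\mathcal{S}$ (acting on vector fields on $\mathbb{R}^2$ with components in $C^2_c(D_1)$) is invertible if and only if it is not symmetric.
   Context: For $\mathbf{x}=(x_1,x_2)$ set $\mathbf{x}^\perp=(-x_2,x_1)$. For a unit vector $\boldsymbol{\gamma}$, $\mathcal{X}_{\boldsymbol{\gamma}}h(\mathbf{x})=\int_0^\infty h(\mathbf{x}+t\boldsymbol{\gamma})\,dt$. The vector-valued star transform is $\mathcal{S}\mathbf{f}=\sum_{i=1}^m c_i\,\mathcal{X}_{\boldsymbol{\gamma}_i}\begin{bmatrix}\mathbf{f}\cdot\boldsymbol{\gamma}_i\\ \mathbf{f}\cdot\boldsymbol{\gamma}_i^\perp\end{bmatrix}$. Invertible means that every such $\mathbf{f}$ is uniquely determined by $\mathcal{S}\mathbf{f}$. $\mathcal{S}$ is called symmetric if $m=2k$ for some $k\in\mathbb{N}$ and, after possible re-indexing, $\boldsymbol{\gamma}_i=-\boldsymbol{\gamma}_{k+i}$ and $c_i=-c_{k+i}$ for all $i=1,\dots,k$. *)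

theory Defs
  imports "HOL-Analysis.Analysis"
begin

definition perp :: "real^2 \<Rightarrow> real^2" where
  "perp x = vector [- (x$2), x$1]"

definition ray_transform :: "real^2 \<Rightarrow> (real^2 \<Rightarrow> real) \<Rightarrow> real^2 \<Rightarrow> real" where
  "ray_transform g h x = integral {0..} (\<lambda>t::real. h (x + t *\<^sub>R g))"

definition pderiv2 :: "(real^2 \<Rightarrow> real) \<Rightarrow> 2 \<Rightarrow> real^2 \<Rightarrow> real" where
  "pderiv2 h j x = frechet_derivative h (at x) (axis j 1)"

definition C2 :: "(real^2 \<Rightarrow> real) \<Rightarrow> bool" where
  "C2 h \<longleftrightarrow> (\<forall>x. h differentiable (at x))
     \<and> (\<forall>j x. pderiv2 h j differentiable (at x))
     \<and> (\<forall>j k. continuous_on UNIV (pderiv2 (pderiv2 h j) k))"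

definition support :: "(real^2 \<Rightarrow> real) \<Rightarrow> (real^2) set" where
  "support h = closure {x. h x \<noteq> 0}"

definition C2c_disc :: "real \<Rightarrow> (real^2 \<Rightarrow> real) \<Rightarrow> bool" where
  "C2c_disc r h \<longleftrightarrow> C2 h \<and> compact (support h) \<and> support h \<subseteq> ball 0 r"

definition admissible_field :: "real \<Rightarrow> (real^2 \<Rightarrow> real^2) \<Rightarrow> bool" where
  "admissible_field r f \<longleftrightarrow> (\<forall>j. C2c_disc r (\<lambda>x. f x $ j))"

definition star_transform ::
  "nat \<Rightarrow> (nat \<Rightarrow> real^2) \<Rightarrow> (nat \<Rightarrow> real) \<Rightarrow> (real^2 \<Rightarrow> real^2) \<Rightarrow> real^2 \<Rightarrow> real^2" where
  "star_transform m g c f x =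
     (\<Sum>i<m. c i *\<^sub>R vector [ray_transform (g i) (\<lambda>y. f y \<bullet> g i) x,
                             ray_transform (g i) (\<lambda>y. f y \<bullet> perp (g i)) x])"

definition star_invertible :: "real \<Rightarrow> nat \<Rightarrow> (nat \<Rightarrow> real^2) \<Rightarrow> (nat \<Rightarrow> real) \<Rightarrow> bool" where
  "star_invertible r m g c \<longleftrightarrow>
     (\<forall>f1 f2. admissible_field r f1 \<longrightarrow> admissible_field r f2 \<longrightarrow>
        star_transform m g c f1 = star_transform m g c f2 \<longrightarrow> f1 = f2)"

definition star_symmetric :: "nat \<Rightarrow> (nat \<Rightarrow> real^2) \<Rightarrow> (nat \<Rightarrow> real) \<Rightarrow> bool" where
  "star_symmetric m g c \<longleftrightarrow>
     (\<exists>k\<ge>1. m = 2 * k \<and> (\<exists>p. p permutes {..<m} \<and>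
        (\<forall>i<k. g (p i) = - g (p (k + i)) \<and> c (p i) = - c (p (k + i)))))"

end

theory Submission
  imports Defs "HOL-Computational_Algebra.Polynomial"
begin

text \<open>
  If \<open>S\<close> is not symmetric and \<open>S f = 0\<close>, apply the finite-difference operator shifting by every
  direction \<open>\<gamma>\<^sub>j\<close>: each ray transform becomes an integral over a unit segment, and the exponential
  transform \<open>L h (\<xi>) = \<integral> h(x) exp(\<xi> \<cdot> x) dx\<close> turns the identity into
  \<open>A(\<xi>) \<cdot> F(\<xi>) = A(\<xi>)\<^sup>\<bottom> \<cdot> F(\<xi>) = 0\<close> wherever no \<open>\<xi> \<cdot> \<gamma>\<^sub>j\<close> vanishes. Here \<open>F = L f\<close>
  componentwise and \<open>A(\<xi>) = \<Sum>\<^sub>i c\<^sub>i \<Prod>\<^bsub>j \<noteq> i\<^esub> (\<xi> \<cdot> \<gamma>\<^sub>j) \<gamma>\<^sub>i\<close> is polynomial.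
  Evaluating \<open>A\<close> at \<open>\<gamma>\<^sub>i\<^sup>\<bottom>\<close> isolates \<open>\<gamma>\<^sub>i\<close> and its antipode, so \<open>A \<equiv> 0\<close> forces every
  direction to be paired with its antipode carrying the opposite weight, which is symmetry.
  Otherwise \<open>F\<close> vanishes on the dense set where \<open>A\<close> and all \<open>\<xi> \<cdot> \<gamma>\<^sub>j\<close> are nonzero, hence
  everywhere, and \<open>f = 0\<close> because exponential sums are uniformly dense (Stone-Weierstrass).

  If \<open>S\<close> is symmetric, each antipodal pair of terms combines into an integral over a whole line.
  These vanish for the field \<open>(\<psi>, 0)\<close> when \<open>\<psi>\<close> is an iterated difference of a bump function
  along the directions \<open>\<gamma>\<^sub>1, \<dots>, \<gamma>\<^sub>k\<close>, so \<open>S (\<psi>, 0) = 0\<close>.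
\<close>

section \<open>Continuous functions supported in a ball\<close>

definition csupp :: "real \<Rightarrow> ('a::real_normed_vector \<Rightarrow> real) \<Rightarrow> bool" where
  "csupp R h \<longleftrightarrow> continuous_on UNIV h \<and> 0 \<le> R \<and> (\<forall>x. R \<le> norm x \<longrightarrow> h x = 0)"

lemma csupp_continuous_on: "csupp R h \<Longrightarrow> continuous_on S h"
  unfolding csupp_def using continuous_on_subset by blast

lemma csupp_zero: "csupp R h \<Longrightarrow> R \<le> norm x \<Longrightarrow> h x = 0"
  unfolding csupp_def by blast

lemma csupp_radius_nonneg: "csupp R h \<Longrightarrow> 0 \<le> R"
  unfolding csupp_def by blast

lemma csupp_mono: "csupp R h \<Longrightarrow> R \<le> R' \<Longrightarrow> csupp R' h"
  unfolding csupp_def by force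

lemma csupp_zero_fun: "0 \<le> R \<Longrightarrow> csupp R (\<lambda>x. 0)"
  unfolding csupp_def by auto

lemma csupp_add: "csupp R h1 \<Longrightarrow> csupp R h2 \<Longrightarrow> csupp R (\<lambda>x. h1 x + h2 x)"
  unfolding csupp_def by (auto intro!: continuous_intros)

lemma csupp_diff: "csupp R h1 \<Longrightarrow> csupp R h2 \<Longrightarrow> csupp R (\<lambda>x. h1 x - h2 x)"
  unfolding csupp_def by (auto intro!: continuous_intros)

lemma csupp_mult_continuous: "csupp R h \<Longrightarrow> continuous_on UNIV w \<Longrightarrow> csupp R (\<lambda>x. h x * w x)"
  unfolding csupp_def by (auto intro!: continuous_intros)

lemma csupp_cmult: "csupp R h \<Longrightarrow> csupp R (\<lambda>x. a * h x)"
  using csupp_mult_continuous[of R h "\<lambda>x. a"] by (simp add: mult.commute)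

lemma csupp_sum:
  assumes "0 \<le> R" "finite I" "\<And>i. i \<in> I \<Longrightarrow> csupp R (h i)"
  shows "csupp R (\<lambda>x. \<Sum>i\<in>I. h i x)"
  using assms(2,3) by (induction I rule: finite_induct) (auto simp: csupp_zero_fun csupp_add assms(1))

lemma csupp_translate:
  fixes h :: "'a::real_normed_vector \<Rightarrow> real"
  assumes "csupp R h"
  shows "csupp (R + norm a) (\<lambda>x. h (x + a))"
  unfolding csupp_def
proof (intro conjI allI impI)
  show "continuous_on UNIV (\<lambda>x. h (x + a))"
    using assms unfolding csupp_def by (auto intro!: continuous_intros continuous_on_compose2[of UNIV h])
  show "0 \<le> R + norm a" using csupp_radius_nonneg[OF assms] by simp
  fix x :: 'a assume "R + norm a \<le> norm x"
  moreover have "norm x \<le> norm (x + a) + norm a" by (metis add_diff_cancel norm_triangle_ineq4)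
  ultimately show "h (x + a) = 0" using csupp_zero[OF assms] by auto
qed

lemma csupp_has_integral_cbox:
  fixes h :: "'a::euclidean_space \<Rightarrow> real"
  assumes "csupp R h" "cball 0 R \<subseteq> cbox a b"
  shows "(h has_integral integral (cbox a b) h) UNIV"
proof -
  have "h integrable_on cbox a b" by (rule integrable_continuous, rule csupp_continuous_on[OF assms(1)])
  then show ?thesis
    by (rule has_integral_on_superset[OF integrable_integral]) (use assms csupp_zero in force)+
qed

lemma csupp_integral_cbox:
  fixes h :: "'a::euclidean_space \<Rightarrow> real"
  shows "csupp R h \<Longrightarrow> cball 0 R \<subseteq> cbox a b \<Longrightarrow> integral UNIV h = integral (cbox a b) h"
  using csupp_has_integral_cbox by blast

lemma csupp_integrable:
  fixes h :: "'a::euclidean_space \<Rightarrow> real"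
  assumes "csupp R h"
  shows "h integrable_on UNIV"
proof -
  obtain a where "cball 0 R \<subseteq> cbox (-a) (a::'a)"
    using bounded_subset_cbox_symmetric[OF bounded_cball] by blast
  then show ?thesis using csupp_has_integral_cbox[OF assms] by blast
qed

lemma csupp_integral_translate:
  fixes h :: "'a::euclidean_space \<Rightarrow> real"
  assumes h: "csupp R h"
  shows "integral UNIV (\<lambda>x. h (x + c)) = integral UNIV h"
proof -
  obtain a where a: "cball 0 (R + norm c) \<subseteq> cbox (-a) (a::'a)"
    using bounded_subset_cbox_symmetric[OF bounded_cball] by blast
  have shifted: "cball 0 R \<subseteq> cbox (-a + c) (a + c)"
  proof
    fix y :: 'a assume "y \<in> cball 0 R"
    then have "norm (y - c) \<le> R + norm c" using norm_triangle_ineq4[of y c] by simp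
    then have "y - c \<in> cbox (-a) a" using a by auto
    then show "y \<in> cbox (-a + c) (a + c)" by (auto simp: mem_box algebra_simps inner_diff_left)
  qed
  have "integral UNIV (\<lambda>x. h (x + c)) = integral (cbox (-a) a) (\<lambda>x. h (x + c))"
    by (rule csupp_integral_cbox[OF csupp_translate[OF h] a])
  also have "\<dots> = integral (cbox (-a + c) (a + c)) h"
    using integral_shift_cbox[where f=h and a="-a + c" and c=c and b="a + c"] by simp
  also have "\<dots> = integral UNIV h"
    by (rule csupp_integral_cbox[OF h shifted, symmetric])
  finally show ?thesis .
qed

section \<open>Finite differences\<close>

text \<open>The expanded form of \<open>\<Prod>\<^bsub>j \<in> J\<^esub> (I - \<tau>\<^bsub>a j\<^esub>)\<close>, where \<open>\<tau>\<^sub>b \<phi> = \<phi> (\<cdot> + b)\<close>.\<close>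

definition fin_diff :: "'i set \<Rightarrow> ('i \<Rightarrow> 'a::ab_group_add) \<Rightarrow> ('a \<Rightarrow> real) \<Rightarrow> 'a \<Rightarrow> real" where
  "fin_diff J a \<phi> x = (\<Sum>B\<in>Pow J. (-1) ^ card B * \<phi> (x + sum a B))"

lemma sum_Pow_insert:
  assumes "finite J" "i \<notin> J"
  shows "(\<Sum>B\<in>Pow (insert i J). F B) = (\<Sum>B\<in>Pow J. F B) + (\<Sum>B\<in>Pow J. F (insert i B))"
proof -
  have "inj_on (insert i) (Pow J)"
    unfolding inj_on_def using assms by (metis PowD insert_ident subsetD)
  moreover have "Pow J \<inter> insert i ` Pow J = {}" using assms by auto
  ultimately show ?thesis
    unfolding Pow_insert using assms by (subst sum.union_disjoint) (auto simp: sum.reindex)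
qed

lemma fin_diff_empty [simp]: "fin_diff {} a \<phi> = \<phi>"
  unfolding fin_diff_def by auto

lemma fin_diff_zero [simp]: "fin_diff J a (\<lambda>x. 0) = (\<lambda>x. 0)"
  unfolding fin_diff_def by auto

lemma fin_diff_insert:
  assumes "finite J" "i \<notin> J"
  shows "fin_diff (insert i J) a \<phi> x = fin_diff J a \<phi> x - fin_diff J a \<phi> (x + a i)"
proof -
  have "fin_diff (insert i J) a \<phi> x
      = fin_diff J a \<phi> x + (\<Sum>B\<in>Pow J. (-1) ^ card (insert i B) * \<phi> (x + sum a (insert i B)))"
    unfolding fin_diff_def by (rule sum_Pow_insert[OF assms])
  also have "(\<Sum>B\<in>Pow J. (-1) ^ card (insert i B) * \<phi> (x + sum a (insert i B)))
      = (\<Sum>B\<in>Pow J. - ((-1) ^ card B * \<phi> ((x + a i) + sum a B)))"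
  proof (rule sum.cong[OF refl])
    fix B assume "B \<in> Pow J"
    then have "finite B" "i \<notin> B" using assms finite_subset by auto
    then show "(-1) ^ card (insert i B) * \<phi> (x + sum a (insert i B))
        = - ((-1) ^ card B * \<phi> ((x + a i) + sum a B))"
      by (simp add: add_ac)
  qed
  also have "\<dots> = - fin_diff J a \<phi> (x + a i)" unfolding fin_diff_def by (simp add: sum_negf)
  finally show ?thesis by simp
qed

lemma fin_diff_diff_shift:
  "fin_diff J a (\<lambda>y. \<phi> y - \<phi> (y + b)) x = fin_diff J a \<phi> x - fin_diff J a \<phi> (x + b)"
  unfolding fin_diff_def by (simp add: sum_subtractf algebra_simps)

lemma fin_diff_remove:
  assumes "finite J" "i \<in> J"
  shows "fin_diff J a \<phi> x = fin_diff (J - {i}) a (\<lambda>y. \<phi> y - \<phi> (y + a i)) x"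
  using fin_diff_insert[of "J - {i}" i a \<phi> x] assms by (simp add: insert_absorb fin_diff_diff_shift)

lemma fin_diff_linear_comb:
  "fin_diff J a (\<lambda>y. \<Sum>i\<in>I. c i * \<phi> i y) x = (\<Sum>i\<in>I. c i * fin_diff J a (\<phi> i) x)"
  unfolding fin_diff_def by (simp add: sum_distrib_left sum.swap[of _ I] algebra_simps)

lemma csupp_fin_diff:
  assumes "csupp R \<phi>" "finite J"
  shows "csupp (R + (\<Sum>j\<in>J. norm (a j))) (fin_diff J a \<phi>)"
proof -
  have "csupp (R + (\<Sum>j\<in>J. norm (a j))) (\<lambda>x. (-1) ^ card B * \<phi> (x + sum a B))" if "B \<in> Pow J" for B
  proof -
    have "norm (sum a B) \<le> (\<Sum>j\<in>B. norm (a j))" by (rule norm_sum)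
    also have "\<dots> \<le> (\<Sum>j\<in>J. norm (a j))" using that assms by (intro sum_mono2) auto
    finally show ?thesis
      using csupp_translate[OF assms(1), of "sum a B"] by (intro csupp_cmult) (auto elim!: csupp_mono)
  qed
  moreover have "0 \<le> R + (\<Sum>j\<in>J. norm (a j))"
    using csupp_radius_nonneg[OF assms(1)] by (simp add: sum_nonneg)
  ultimately show ?thesis
    unfolding fin_diff_def[abs_def] using assms(2) by (intro csupp_sum) auto
qed

lemma periodic_vanishing_zero:
  fixes \<psi> :: "'a::real_normed_vector \<Rightarrow> real"
  assumes zero: "\<And>x. R \<le> norm x \<Longrightarrow> \<psi> x = 0" and "a \<noteq> 0" and per: "\<And>x. \<psi> (x + a) = \<psi> x"
  shows "\<psi> x = 0"
proof -
  have iter: "\<psi> (x + real n *\<^sub>R a) = \<psi> x" for n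
  proof (induction n)
    case (Suc n)
    have "x + real (Suc n) *\<^sub>R a = (x + real n *\<^sub>R a) + a" by (simp add: algebra_simps)
    then show ?case using Suc per by metis
  qed simp
  obtain n where n: "R + norm x < real n * norm a"
    using \<open>a \<noteq> 0\<close> ex_less_of_nat_mult[of "norm a"] by auto
  have "norm (real n *\<^sub>R a) \<le> norm (x + real n *\<^sub>R a) + norm x"
    by (metis add.commute add_diff_cancel norm_triangle_ineq4)
  then have "R \<le> norm (x + real n *\<^sub>R a)" using n by simp
  then show ?thesis using iter zero by metis
qed

lemma fin_diff_nonzero:
  assumes "finite J" "csupp R \<phi>" "\<phi> x0 \<noteq> 0" "\<forall>j\<in>J. a j \<noteq> 0"
  shows "\<exists>x. fin_diff J a \<phi> x \<noteq> 0"
  using assms(1,4)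
proof (induction J rule: finite_induct)
  case empty
  then show ?case using assms(3) by auto
next
  case (insert i J)
  obtain x1 where x1: "fin_diff J a \<phi> x1 \<noteq> 0" using insert by auto
  show ?case
  proof (rule ccontr)
    assume "\<not> ?case"
    then have "fin_diff J a \<phi> (x + a i) = fin_diff J a \<phi> x" for x
      using fin_diff_insert[OF insert(1,2), of a \<phi> x] by auto
    then have "fin_diff J a \<phi> x1 = 0"
      using periodic_vanishing_zero csupp_zero[OF csupp_fin_diff[OF assms(2) insert(1)]] insert(4)
      by blast
    with x1 show False by contradiction
  qed
qed

section \<open>The exponential transform\<close>

definition laplace :: "('a::euclidean_space \<Rightarrow> real) \<Rightarrow> 'a \<Rightarrow> real" where
  "laplace h \<xi> = integral UNIV (\<lambda>x. h x * exp (\<xi> \<bullet> x))"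

lemma csupp_exp_weight: "csupp R h \<Longrightarrow> csupp R (\<lambda>x. h x * exp (\<xi> \<bullet> x))"
  by (rule csupp_mult_continuous) (auto intro!: continuous_intros)

lemma laplace_translate:
  assumes "csupp R h"
  shows "laplace (\<lambda>x. h (x + a)) \<xi> = exp (- (\<xi> \<bullet> a)) * laplace h \<xi>"
proof -
  have "laplace (\<lambda>x. h (x + a)) \<xi>
      = integral UNIV (\<lambda>x. exp (- (\<xi> \<bullet> a)) * (h (x + a) * exp (\<xi> \<bullet> (x + a))))"
    unfolding laplace_def
    by (intro integral_cong) (simp add: inner_add_right exp_add[symmetric] exp_minus field_simps)
  also have "\<dots> = exp (- (\<xi> \<bullet> a)) * laplace h \<xi>"
    unfolding laplace_def using csupp_integral_translate[OF csupp_exp_weight[OF assms]] by simp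
  finally show ?thesis .
qed

lemma laplace_linear_comb:
  assumes "finite I" "\<And>i. i \<in> I \<Longrightarrow> \<exists>R. csupp R (\<phi> i)"
  shows "laplace (\<lambda>x. \<Sum>i\<in>I. c i * \<phi> i x) \<xi> = (\<Sum>i\<in>I. c i * laplace (\<phi> i) \<xi>)"
proof -
  have "(\<lambda>x. c i * (\<phi> i x * exp (\<xi> \<bullet> x))) integrable_on UNIV" if "i \<in> I" for i
    using assms(2)[OF that] csupp_integrable csupp_exp_weight integrable_on_mult_right by blast
  then show ?thesis
    unfolding laplace_def
    by (simp add: sum_distrib_right mult.assoc integral_sum[OF assms(1)])
qed

lemma laplace_diff:
  assumes "csupp R p" "csupp R' q"
  shows "laplace (\<lambda>x. p x - q x) \<xi> = laplace p \<xi> - laplace q \<xi>"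
proof -
  have "(\<lambda>x. p x * exp (\<xi> \<bullet> x)) integrable_on UNIV" "(\<lambda>x. q x * exp (\<xi> \<bullet> x)) integrable_on UNIV"
    using assms csupp_integrable csupp_exp_weight by blast+
  then show ?thesis unfolding laplace_def by (simp add: left_diff_distrib integral_diff)
qed

lemma laplace_fin_diff:
  assumes "csupp R \<phi>" "finite J"
  shows "laplace (fin_diff J a \<phi>) \<xi> = (\<Prod>j\<in>J. 1 - exp (- (\<xi> \<bullet> a j))) * laplace \<phi> \<xi>"
  using assms(2)
proof (induction J rule: finite_induct)
  case (insert i J)
  have cs: "csupp (R + (\<Sum>j\<in>J. norm (a j))) (fin_diff J a \<phi>)" by (rule csupp_fin_diff[OF assms(1) insert(1)])
  have "fin_diff (insert i J) a \<phi> = (\<lambda>x. fin_diff J a \<phi> x - fin_diff J a \<phi> (x + a i))"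
    by (rule ext) (rule fin_diff_insert[OF insert(1,2)])
  then have "laplace (fin_diff (insert i J) a \<phi>) \<xi>
      = (1 - exp (- (\<xi> \<bullet> a i))) * laplace (fin_diff J a \<phi>) \<xi>"
    by (simp only: laplace_diff[OF cs csupp_translate[OF cs]] laplace_translate[OF cs]) (simp add: algebra_simps)
  then show ?case using insert by simp
qed simp

lemma continuous_on_laplace:
  fixes h :: "'a::euclidean_space \<Rightarrow> real"
  assumes "csupp R h"
  shows "continuous_on UNIV (laplace h)"
proof -
  obtain a :: 'a where a: "cball 0 R \<subseteq> cbox (-a) a"
    using bounded_subset_cbox_symmetric[OF bounded_cball] by blast
  have "continuous_on (UNIV \<times> cbox (-a) a) (\<lambda>p. h (snd p))"
    by (rule continuous_on_compose2[OF csupp_continuous_on[OF assms] continuous_on_snd]) auto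
  then have "continuous_on (UNIV \<times> cbox (-a) a) (\<lambda>(\<xi>, x). h x * exp (\<xi> \<bullet> x))"
    unfolding split_beta by (intro continuous_intros)
  then have "continuous_on UNIV (\<lambda>\<xi>. integral (cbox (-a) a) (\<lambda>x. h x * exp (\<xi> \<bullet> x)))"
    by (rule integral_continuous_on_param)
  moreover have "laplace h \<xi> = integral (cbox (-a) a) (\<lambda>x. h x * exp (\<xi> \<bullet> x))" for \<xi>
    unfolding laplace_def by (rule csupp_integral_cbox[OF csupp_exp_weight[OF assms] a])
  ultimately show ?thesis by simp
qed

definition segment_integral :: "'a \<Rightarrow> real \<Rightarrow> ('a::real_normed_vector \<Rightarrow> real) \<Rightarrow> 'a \<Rightarrow> real" where
  "segment_integral g s h x = integral {0..s} (\<lambda>t. h (x + t *\<^sub>R g))"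

lemma csupp_segment_integral:
  fixes h :: "'a::euclidean_space \<Rightarrow> real"
  assumes h: "csupp R h" and s: "0 \<le> s"
  shows "csupp (R + s * norm g) (segment_integral g s h)"
  unfolding csupp_def
proof (intro conjI allI impI)
  have "continuous_on (UNIV \<times> cbox 0 s) (\<lambda>p. h (fst p + snd p *\<^sub>R g))"
    by (rule continuous_on_compose2[OF csupp_continuous_on[OF h]]) (auto intro!: continuous_intros)
  then show "continuous_on UNIV (segment_integral g s h)"
    unfolding segment_integral_def using integral_continuous_on_param[of UNIV 0 s "\<lambda>x t. h (x + t *\<^sub>R g)"]
    by (simp add: split_beta cbox_interval)
  show "0 \<le> R + s * norm g" using csupp_radius_nonneg[OF h] s by simp
  fix x :: 'a assume x: "R + s * norm g \<le> norm x"
  have "h (x + t *\<^sub>R g) = 0" if "t \<in> {0..s}" for t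
  proof (rule csupp_zero[OF h])
    have "norm x \<le> norm (x + t *\<^sub>R g) + \<bar>t\<bar> * norm g" by (metis add_diff_cancel norm_scaleR norm_triangle_ineq4)
    moreover have "\<bar>t\<bar> * norm g \<le> s * norm g" using that by (intro mult_right_mono) auto
    ultimately show "R \<le> norm (x + t *\<^sub>R g)" using x by linarith
  qed
  then have "integral {0..s} (\<lambda>t. h (x + t *\<^sub>R g)) = integral {0..s} (\<lambda>t. 0)"
    by (rule integral_cong)
  then show "segment_integral g s h x = 0" unfolding segment_integral_def by simp
qed

lemma integral_exp_linear:
  fixes k s :: real
  assumes "k \<noteq> 0" "0 \<le> s"
  shows "integral {0..s} (\<lambda>t. exp (- (t * k))) = (1 - exp (- (s * k))) / k"
proof -
  have "((\<lambda>t. exp (- (t * k))) has_integral (- exp (- (s * k)) / k - - exp (- (0 * k)) / k)) {0..s}"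
    by (rule fundamental_theorem_of_calculus[OF assms(2)])
       (use assms in \<open>auto intro!: derivative_eq_intros simp: has_real_derivative_iff_has_vector_derivative[symmetric]\<close>)
  then show ?thesis by (simp add: integral_unique diff_divide_distrib)
qed

lemma laplace_segment_integral:
  fixes h :: "'a::euclidean_space \<Rightarrow> real"
  assumes h: "csupp R h" and s: "0 \<le> s" and k: "\<xi> \<bullet> g \<noteq> 0"
  shows "laplace (segment_integral g s h) \<xi> = (1 - exp (- (s * (\<xi> \<bullet> g)))) / (\<xi> \<bullet> g) * laplace h \<xi>"
proof -
  obtain a :: 'a where a: "cball 0 (R + s * norm g) \<subseteq> cbox (-a) a"
    using bounded_subset_cbox_symmetric[OF bounded_cball] by blast
  have "continuous_on (cbox (-a, 0) (a, s)) (\<lambda>p. h (fst p + snd p *\<^sub>R g))"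
    by (rule continuous_on_compose2[OF csupp_continuous_on[OF h]]) (auto intro!: continuous_intros)
  then have cont: "continuous_on (cbox (-a, 0) (a, s)) (\<lambda>(x, t). h (x + t *\<^sub>R g) * exp (\<xi> \<bullet> x))"
    unfolding split_beta by (intro continuous_intros)
  have shifted: "laplace (\<lambda>x. h (x + t *\<^sub>R g)) \<xi> = integral (cbox (-a) a) (\<lambda>x. h (x + t *\<^sub>R g) * exp (\<xi> \<bullet> x))"
    if "t \<in> cbox 0 s" for t
  proof -
    have "R + norm (t *\<^sub>R g) \<le> R + s * norm g"
      using that by (simp add: cbox_interval mult_right_mono)
    then have "cball 0 (R + norm (t *\<^sub>R g)) \<subseteq> cbox (-a) a"
      using a subset_cball by blast
    then show ?thesis unfolding laplace_def
      by (rule csupp_integral_cbox[OF csupp_exp_weight[OF csupp_translate[OF h]]])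
  qed
  have "laplace (segment_integral g s h) \<xi>
      = integral (cbox (-a) a) (\<lambda>x. integral (cbox 0 s) (\<lambda>t. h (x + t *\<^sub>R g) * exp (\<xi> \<bullet> x)))"
    unfolding laplace_def csupp_integral_cbox[OF csupp_exp_weight[OF csupp_segment_integral[OF h s]] a]
    by (simp add: segment_integral_def cbox_interval)
  also have "\<dots> = integral (cbox 0 s) (\<lambda>t. integral (cbox (-a) a) (\<lambda>x. h (x + t *\<^sub>R g) * exp (\<xi> \<bullet> x)))"
    using integral_swap_continuous[OF cont] by simp
  also have "\<dots> = integral (cbox 0 s) (\<lambda>t. laplace (\<lambda>x. h (x + t *\<^sub>R g)) \<xi>)"
    using shifted by (intro integral_cong) simp
  also have "\<dots> = integral {0..s} (\<lambda>t. exp (- (t * (\<xi> \<bullet> g)))) * laplace h \<xi>"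
    by (simp add: laplace_translate[OF h] cbox_interval)
  finally show ?thesis by (simp add: integral_exp_linear[OF k s])
qed

definition exp_sum :: "(real \<times> 'a) list \<Rightarrow> 'a::real_inner \<Rightarrow> real" where
  "exp_sum L x = (\<Sum>(a, \<xi>)\<leftarrow>L. a * exp (\<xi> \<bullet> x))"

lemma exp_sum_Nil [simp]: "exp_sum [] x = 0"
  and exp_sum_Cons [simp]: "exp_sum ((a, \<xi>) # L) x = a * exp (\<xi> \<bullet> x) + exp_sum L x"
  and exp_sum_append [simp]: "exp_sum (L1 @ L2) x = exp_sum L1 x + exp_sum L2 x"
  unfolding exp_sum_def by simp_all

lemma exp_sum_mult:
  "exp_sum [(a * b, \<xi> + \<eta>). (a, \<xi>) \<leftarrow> L1, (b, \<eta>) \<leftarrow> L2] x = exp_sum L1 x * exp_sum L2 x"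
proof -
  have shift: "exp_sum (map (\<lambda>(b, \<eta>). (a * b, \<xi> + \<eta>)) L2) x = a * exp (\<xi> \<bullet> x) * exp_sum L2 x" for a \<xi>
    by (induction L2) (auto simp: inner_add_left exp_add algebra_simps)
  show ?thesis
    by (induction L1) (auto simp: shift algebra_simps)
qed

lemma continuous_on_exp_sum: "continuous_on S (exp_sum L)"
  by (induction L) (auto simp: exp_sum_def intro!: continuous_intros)

lemma function_ring_on_exp_sums:
  fixes S :: "'a::euclidean_space set"
  assumes "compact S"
  shows "function_ring_on (range exp_sum) S"
proof unfold_locales
  show "(\<lambda>x. f x + g x) \<in> range exp_sum" "(\<lambda>x. f x * g x) \<in> range exp_sum"
    if fg: "f \<in> range exp_sum" "g \<in> range exp_sum" for f g
  proof -
    obtain L1 L2 where "f = exp_sum L1" "g = exp_sum L2" using fg by blast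
    then have "(\<lambda>x. f x + g x) = exp_sum (L1 @ L2)"
      and "(\<lambda>x. f x * g x) = exp_sum [(a * b, \<xi> + \<eta>). (a, \<xi>) \<leftarrow> L1, (b, \<eta>) \<leftarrow> L2]"
      by (simp_all add: fun_eq_iff exp_sum_mult)
    then show "(\<lambda>x. f x + g x) \<in> range exp_sum" "(\<lambda>x. f x * g x) \<in> range exp_sum" by blast+
  qed
  show "(\<lambda>_. c) \<in> range exp_sum" for c
    by (rule range_eqI[of _ _ "[(c, 0)]"]) (simp add: fun_eq_iff)
  show "\<exists>f\<in>range exp_sum. f x \<noteq> f y" if "x \<noteq> y" for x y
  proof -
    have "(x - y) \<bullet> x \<noteq> (x - y) \<bullet> y"
      using that by (metis eq_iff_diff_eq_0 inner_diff_right inner_eq_zero_iff)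
    then have "exp_sum [(1, x - y)] x \<noteq> exp_sum [(1, x - y)] y" by simp
    then show ?thesis by blast
  qed
qed (use assms continuous_on_exp_sum in auto)

lemma integral_mult_exp_sum:
  assumes h: "csupp R h" and L: "\<And>\<xi>. laplace h \<xi> = 0"
  shows "integral UNIV (\<lambda>x. h x * exp_sum L x) = 0"
proof (induction L)
  case (Cons p L)
  obtain a \<xi> where p: "p = (a, \<xi>)" by (cases p)
  have "(\<lambda>x. a * (h x * exp (\<xi> \<bullet> x))) integrable_on UNIV"
    by (intro integrable_on_mult_right csupp_integrable[OF csupp_exp_weight[OF h]])
  moreover have "(\<lambda>x. h x * exp_sum L x) integrable_on UNIV"
    by (rule csupp_integrable[OF csupp_mult_continuous[OF h continuous_on_exp_sum]])
  ultimately have "integral UNIV (\<lambda>x. h x * exp_sum (p # L) x) = a * laplace h \<xi> + integral UNIV (\<lambda>x. h x * exp_sum L x)"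
    by (simp add: p laplace_def algebra_simps integral_add)
  then show ?case using Cons L by simp
qed simp

text \<open>If \<open>h\<close> is orthogonal to uniform approximants of itself, then
  \<open>\<integral> h\<^sup>2 \<le> e \<integral> \<bar>h\<bar>\<close> for every \<open>e > 0\<close>.\<close>

lemma orthogonal_approximants_imp_zero:
  fixes h :: "'a::euclidean_space \<Rightarrow> real"
  assumes h: "continuous_on (cbox a b) h" and ne: "box a b \<noteq> {}"
    and approx: "\<And>e. e > 0 \<Longrightarrow> \<exists>f. continuous_on (cbox a b) f
        \<and> integral (cbox a b) (\<lambda>x. h x * f x) = 0 \<and> (\<forall>x\<in>cbox a b. \<bar>h x - f x\<bar> < e)"
    and x: "x \<in> cbox a b"
  shows "h x = 0"
proof -
  let ?I = "integral (cbox a b) (\<lambda>x. h x * h x)"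
  let ?M = "integral (cbox a b) (\<lambda>x. \<bar>h x\<bar>)"
  have M0: "0 \<le> ?M" by (rule integral_nonneg) (auto intro!: integrable_continuous continuous_intros h)
  have bound: "?I \<le> e * ?M" if e: "0 < e" for e
  proof -
    obtain f where f: "continuous_on (cbox a b) f" and orth: "integral (cbox a b) (\<lambda>x. h x * f x) = 0"
      and close: "\<forall>x\<in>cbox a b. \<bar>h x - f x\<bar> < e"
      using approx[OF e] by blast
    have "?I = integral (cbox a b) (\<lambda>x. h x * (h x - f x)) + integral (cbox a b) (\<lambda>x. h x * f x)"
      by (subst integral_add[symmetric]) (auto intro!: integrable_continuous continuous_intros h f simp: algebra_simps)
    also have "\<dots> \<le> integral (cbox a b) (\<lambda>x. e * \<bar>h x\<bar>)"
    proof -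
      have "norm (integral (cbox a b) (\<lambda>x. h x * (h x - f x))) \<le> integral (cbox a b) (\<lambda>x. e * \<bar>h x\<bar>)"
      proof (rule integral_norm_bound_integral)
        fix x assume "x \<in> cbox a b"
        then have "\<bar>h x\<bar> * \<bar>h x - f x\<bar> \<le> \<bar>h x\<bar> * e" using close by (intro mult_left_mono) force+
        then show "norm (h x * (h x - f x)) \<le> e * \<bar>h x\<bar>" by (simp add: abs_mult mult.commute)
      qed (auto intro!: integrable_continuous continuous_intros h f)
      then show ?thesis using orth by simp
    qed
    finally show ?thesis by simp
  qed
  have "?I \<le> 0"
  proof (rule ccontr)
    assume "\<not> ?I \<le> 0"
    define e where "e = ?I / (2 * (?M + 1))"
    have e: "0 < e" unfolding e_def using \<open>\<not> ?I \<le> 0\<close> M0 by simp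
    have "?I \<le> e * ?M" by (rule bound[OF e])
    also have "\<dots> \<le> e * (?M + 1)" using e by simp
    also have "\<dots> = ?I / 2" unfolding e_def using M0 by (simp add: field_simps)
    finally show False using \<open>\<not> ?I \<le> 0\<close> by simp
  qed
  moreover have "0 \<le> ?I" by (rule integral_nonneg) (auto intro!: integrable_continuous continuous_intros h)
  ultimately have "?I = 0" by simp
  then show ?thesis
    using integral_cbox_eq_0_iff[of a b "\<lambda>x. h x * h x"] h ne x by (simp add: continuous_intros)
qed

lemma laplace_eq_zero_imp_zero:
  fixes h :: "'a::euclidean_space \<Rightarrow> real"
  assumes h: "csupp R h" and L: "\<And>\<xi>. laplace h \<xi> = 0"
  shows "h x = 0"
proof -
  obtain a :: 'a where a: "cball 0 (R + 1) \<subseteq> cbox (-a) a"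
    using bounded_subset_cbox_symmetric[OF bounded_cball] by blast
  have R: "cball 0 R \<subseteq> cbox (-a) a" using a subset_cball[of R "R + 1"] by auto
  have "0 \<in> interior (cbox (-a) a)"
    using interior_mono[OF order_trans[OF ball_subset_cball a]] csupp_radius_nonneg[OF h] by force
  then have ne: "box (-a) a \<noteq> {}" by auto
  interpret exp_ring: function_ring_on "range exp_sum" "cbox (-a) a"
    by (rule function_ring_on_exp_sums) simp
  have "h x = 0" if "x \<in> cbox (-a) a" for x
  proof (rule orthogonal_approximants_imp_zero[OF csupp_continuous_on[OF h] ne _ that])
    fix e :: real assume "e > 0"
    then obtain L where close: "\<forall>x\<in>cbox (-a) a. \<bar>h x - exp_sum L x\<bar> < e"
      using exp_ring.Stone_Weierstrass_basic[OF csupp_continuous_on[OF h]] by blast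
    have "integral (cbox (-a) a) (\<lambda>x. h x * exp_sum L x) = 0"
      using csupp_integral_cbox[OF csupp_mult_continuous[OF h continuous_on_exp_sum] R]
        integral_mult_exp_sum[OF h L] by simp
    then show "\<exists>f. continuous_on (cbox (-a) a) f \<and> integral (cbox (-a) a) (\<lambda>x. h x * f x) = 0
        \<and> (\<forall>x\<in>cbox (-a) a. \<bar>h x - f x\<bar> < e)"
      using close continuous_on_exp_sum by blast
  qed
  moreover have "h x = 0" if "x \<notin> cbox (-a) a" for x
    using that R csupp_zero[OF h, of x] by force
  ultimately show ?thesis by blast
qed

section \<open>Zeros of polynomial functions\<close>

lemma continuous_on_real_polynomial_function:
  "real_polynomial_function f \<Longrightarrow> continuous_on S f"
  by (simp add: continuous_at_imp_continuous_on continuous_real_polymonial_function)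

lemma real_polynomial_function_on_line:
  assumes "real_polynomial_function F"
  obtains p where "\<And>t. F (\<xi> + t *\<^sub>R \<eta>) = poly p t"
proof -
  have "\<exists>p. \<forall>t. F (\<xi> + t *\<^sub>R \<eta>) = poly p t"
    using assms
  proof (induction F)
    case (linear f)
    then interpret bounded_linear f .
    have "f (\<xi> + t *\<^sub>R \<eta>) = poly [:f \<xi>, f \<eta>:] t" for t by (simp add: add scale)
    then show ?case by blast
  next
    case (const c)
    have "c = poly [:c:] t" for t by simp
    then show ?case by blast
  next
    case (add f g)
    then obtain p q where "\<forall>t. f (\<xi> + t *\<^sub>R \<eta>) = poly p t" "\<forall>t. g (\<xi> + t *\<^sub>R \<eta>) = poly q t" by blast
    then have "\<forall>t. f (\<xi> + t *\<^sub>R \<eta>) + g (\<xi> + t *\<^sub>R \<eta>) = poly (p + q) t" by simp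
    then show ?case by blast
  next
    case (mult f g)
    then obtain p q where "\<forall>t. f (\<xi> + t *\<^sub>R \<eta>) = poly p t" "\<forall>t. g (\<xi> + t *\<^sub>R \<eta>) = poly q t" by blast
    then have "\<forall>t. f (\<xi> + t *\<^sub>R \<eta>) * g (\<xi> + t *\<^sub>R \<eta>) = poly (p * q) t" by simp
    then show ?case by blast
  qed
  then show ?thesis using that by blast
qed

text \<open>On the line through \<open>\<xi>\<close> and a point where \<open>F \<noteq> 0\<close>, the polynomial \<open>F\<close> has only finitely
  many zeros, and a finite subset of \<open>\<real>\<close> has dense complement.\<close>

lemma continuous_vanishing_off_polynomial_zeros:
  fixes F G :: "'a::real_normed_vector \<Rightarrow> real"
  assumes F: "real_polynomial_function F" "F \<xi>1 \<noteq> 0"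
    and G: "continuous_on UNIV G" "\<And>\<xi>. F \<xi> \<noteq> 0 \<Longrightarrow> G \<xi> = 0"
  shows "G \<xi> = 0"
proof -
  obtain p where p: "\<And>t. F (\<xi> + t *\<^sub>R (\<xi>1 - \<xi>)) = poly p t"
    using real_polynomial_function_on_line[OF F(1)] by blast
  have "poly p 1 \<noteq> 0" using F(2) p[of 1] by simp
  then have "finite {t. poly p t = 0}" by (intro poly_roots_finite) auto
  then have dense: "closure (- {t. poly p t = 0}) = UNIV"
    by (simp add: closure_complement empty_interior_finite)
  have "continuous_on UNIV (\<lambda>t. G (\<xi> + t *\<^sub>R (\<xi>1 - \<xi>)))"
    by (rule continuous_on_compose2[OF G(1)]) (auto intro!: continuous_intros)
  then have "closed {t \<in> UNIV. G (\<xi> + t *\<^sub>R (\<xi>1 - \<xi>)) = 0}"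
    by (rule continuous_closed_preimage_constant) simp
  moreover have "- {t. poly p t = 0} \<subseteq> {t \<in> UNIV. G (\<xi> + t *\<^sub>R (\<xi>1 - \<xi>)) = 0}"
    using G(2) p by auto
  ultimately have "0 \<in> {t \<in> UNIV. G (\<xi> + t *\<^sub>R (\<xi>1 - \<xi>)) = 0}"
    using closure_minimal dense by blast
  then show ?thesis by simp
qed

section \<open>Directions in the plane\<close>

lemma inner_vec2: "(x::real^2) \<bullet> y = x$1 * y$1 + x$2 * y$2"
  by (simp add: inner_vec_def sum_2)

lemma vec2_eq_iff: "(x::real^2) = y \<longleftrightarrow> x$1 = y$1 \<and> x$2 = y$2"
  by (simp add: vec_eq_iff forall_2)

lemma perp_nth [simp]: "perp v $ 1 = - (v$2)" "perp v $ 2 = v$1"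
  unfolding perp_def by simp_all

lemma linear_perp: "linear perp"
  by (rule linearI) (simp_all add: vec2_eq_iff)

lemma inner_perp_self: "perp v \<bullet> v = 0"
  by (simp add: inner_vec2)

lemma norm_vec2_eq_1: "norm (x::real^2) = 1 \<longleftrightarrow> (x$1)^2 + (x$2)^2 = 1"
  by (simp add: norm_eq_1 inner_vec2 power2_eq_square)

lemma unit_neq_uminus:
  fixes x :: "'a::real_normed_vector"
  assumes "norm x = 1"
  shows "x \<noteq> - x"
proof
  assume "x = - x"
  then have "2 *\<^sub>R x = 0" by (metis add.right_inverse scaleR_2)
  then show False using assms by simp
qed

lemma orthogonal_perp_unit:
  assumes u: "norm u = 1" and v: "norm v = 1" and o: "perp v \<bullet> u = 0"
  shows "u = v \<or> u = - v"
proof -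
  have u': "(u$1)^2 + (u$2)^2 = 1" and v': "(v$1)^2 + (v$2)^2 = 1" using u v norm_vec2_eq_1 by auto
  have o': "u$1 * v$2 = u$2 * v$1" using o by (simp add: inner_vec2 algebra_simps)
  define l where "l = u$1 * v$1 + u$2 * v$2"
  have e1: "u$1 = l * v$1" and e2: "u$2 = l * v$2" unfolding l_def using v' o' by algebra+
  have "l^2 = 1" using u' v' e1 e2
    by (metis (no_types, lifting) distrib_left mult.right_neutral power_mult_distrib)
  then have "l = 1 \<or> l = -1" by (simp add: power2_eq_1_iff)
  then show ?thesis using e1 e2 by (auto simp: vec2_eq_iff)
qed

lemma orthogonal_vec_and_perp_imp_zero:
  assumes "v \<bullet> x = 0" "perp v \<bullet> x = 0" "v \<noteq> 0"
  shows "x = 0"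
proof -
  let ?n = "(v$1)^2 + (v$2)^2"
  have "?n \<noteq> 0" using assms(3) by (simp add: vec2_eq_iff sum_power2_eq_zero_iff)
  moreover have "?n * x$1 = v$1 * (v \<bullet> x) - v$2 * (perp v \<bullet> x)"
    and "?n * x$2 = v$2 * (v \<bullet> x) + v$1 * (perp v \<bullet> x)"
    by (simp_all add: inner_vec2 power2_eq_square algebra_simps)
  ultimately show ?thesis using assms(1,2) by (auto simp: vec2_eq_iff)
qed

definition cofactor_sum :: "'i set \<Rightarrow> ('i \<Rightarrow> 'a::real_inner) \<Rightarrow> ('i \<Rightarrow> 'b::real_vector) \<Rightarrow> 'a \<Rightarrow> 'b" where
  "cofactor_sum I g a \<xi> = (\<Sum>i\<in>I. (\<Prod>j\<in>I - {i}. \<xi> \<bullet> g j) *\<^sub>R a i)"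

lemma cofactor_sum_nth: "cofactor_sum I g a \<xi> $ k = cofactor_sum I g (\<lambda>i. a i $ k) \<xi>"
  unfolding cofactor_sum_def by simp

lemma cofactor_sum_inner: "cofactor_sum I g a \<xi> \<bullet> v = cofactor_sum I g (\<lambda>i. a i \<bullet> v) \<xi>"
  unfolding cofactor_sum_def by (simp add: inner_sum_left)

lemma perp_cofactor_sum: "perp (cofactor_sum I g a \<xi>) = cofactor_sum I g (\<lambda>i. perp (a i)) \<xi>"
  unfolding cofactor_sum_def by (simp add: linear_sum[OF linear_perp] linear_scale[OF linear_perp])

lemma real_polynomial_function_inner_left: "real_polynomial_function (\<lambda>\<xi>. \<xi> \<bullet> v)"
  by (intro real_polynomial_function.intros(1) bounded_linear_inner_left)

lemma real_polynomial_function_cofactor_sum: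
  "finite I \<Longrightarrow> real_polynomial_function (cofactor_sum I g a)"
  unfolding cofactor_sum_def[abs_def] real_scaleR_def
  by (intro real_polynomial_function_sum real_polynomial_function.intros(2,4)
      real_polynomial_function_prod real_polynomial_function_inner_left) auto

lemma real_polynomial_function_direction_product:
  "finite I \<Longrightarrow> real_polynomial_function (\<lambda>\<xi>. \<Prod>j\<in>I. \<xi> \<bullet> g j)"
  by (intro real_polynomial_function_prod real_polynomial_function_inner_left)

lemma cofactor_sum_remove:
  assumes "finite I" "i0 \<in> I"
  shows "cofactor_sum I g a \<xi>
    = (\<Prod>j\<in>I - {i0}. \<xi> \<bullet> g j) *\<^sub>R a i0 + (\<xi> \<bullet> g i0) *\<^sub>R cofactor_sum (I - {i0}) g a \<xi>"
proof -
  have "(\<Prod>j\<in>I - {i}. \<xi> \<bullet> g j) = (\<xi> \<bullet> g i0) * (\<Prod>j\<in>I - {i0} - {i}. \<xi> \<bullet> g j)"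
    if "i \<in> I - {i0}" for i
    using that assms by (subst prod.remove[of _ i0]) (auto simp: Diff_insert2[symmetric] insert_commute)
  then have "(\<Sum>i\<in>I - {i0}. (\<Prod>j\<in>I - {i}. \<xi> \<bullet> g j) *\<^sub>R a i)
      = (\<xi> \<bullet> g i0) *\<^sub>R cofactor_sum (I - {i0}) g a \<xi>"
    unfolding cofactor_sum_def scaleR_sum_right by (intro sum.cong) simp_all
  then show ?thesis
    unfolding cofactor_sum_def[of I] using assms by (simp add: sum.remove[of I i0])
qed

lemma exists_direction_product_nonzero:
  fixes g :: "'i \<Rightarrow> 'a::real_inner"
  assumes "finite I" "\<forall>j\<in>I. g j \<noteq> 0"
  shows "\<exists>\<xi>. (\<Prod>j\<in>I. \<xi> \<bullet> g j) \<noteq> 0"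
  using assms
proof (induction I rule: finite_induct)
  case (insert i I)
  then obtain \<xi>1 where \<xi>1: "(\<Prod>j\<in>I. \<xi>1 \<bullet> g j) \<noteq> 0" by auto
  show ?case
  proof (rule ccontr)
    assume "\<not> ?case"
    then have "\<xi> \<bullet> g i = 0" if "(\<Prod>j\<in>I. \<xi> \<bullet> g j) \<noteq> 0" for \<xi>
      using that insert(1,2) by auto
    moreover have "continuous_on UNIV (\<lambda>\<xi>. \<xi> \<bullet> g i)" by (intro continuous_intros)
    ultimately have "g i \<bullet> g i = 0"
      using continuous_vanishing_off_polynomial_zeros[OF real_polynomial_function_direction_product[OF insert(1)] \<xi>1]
      by blast
    then show False using insert(4) by simp
  qed
qed simp

lemma cofactor_sum_zero_unpaired:
  fixes g :: "'i \<Rightarrow> real^2" and a :: "'i \<Rightarrow> real"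
  assumes zero: "\<And>\<xi>. cofactor_sum I g a \<xi> = 0" and I: "finite I"
    and units: "\<forall>i\<in>I. norm (g i) = 1" and inj: "inj_on g I"
    and i0: "i0 \<in> I" and unpaired: "\<forall>i\<in>I. g i \<noteq> - g i0"
  shows "a i0 = 0"
proof -
  have "perp (g i0) \<bullet> g j \<noteq> 0" if "j \<in> I - {i0}" for j
    using orthogonal_perp_unit[of "g j" "g i0"] that units inj i0 unpaired by (auto simp: inj_on_def)
  then have "(\<Prod>j\<in>I - {i0}. perp (g i0) \<bullet> g j) \<noteq> 0" using I by simp
  moreover have "cofactor_sum I g a (perp (g i0)) = (\<Prod>j\<in>I - {i0}. perp (g i0) \<bullet> g j) * a i0"
    using cofactor_sum_remove[OF I i0, of g a "perp (g i0)"] by (simp add: inner_perp_self)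
  ultimately show ?thesis using zero by simp
qed

lemma cofactor_sum_zero_paired:
  fixes g :: "'i \<Rightarrow> real^2" and a :: "'i \<Rightarrow> real"
  assumes zero: "\<And>\<xi>. cofactor_sum I g a \<xi> = 0" and I: "finite I"
    and units: "\<forall>i\<in>I. norm (g i) = 1" and inj: "inj_on g I"
    and i0: "i0 \<in> I" and i1: "i1 \<in> I" and opposite: "g i1 = - g i0"
  shows "a i1 = a i0"
proof -
  have "i0 \<noteq> i1"
  proof
    assume "i0 = i1"
    then show False using opposite unit_neq_uminus[of "g i0"] units i0 by simp
  qed
  define J where "J = I - {i0} - {i1}"
  have J: "finite J" "i1 \<in> I - {i0}" using I i1 \<open>i0 \<noteq> i1\<close> unfolding J_def by auto
  define G where "G \<xi> = (a i1 - a i0) * (\<Prod>j\<in>J. \<xi> \<bullet> g j) - (\<xi> \<bullet> g i0) * cofactor_sum J g a \<xi>" for \<xi>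
  have factor: "cofactor_sum I g a \<xi> = (\<xi> \<bullet> g i0) * G \<xi>" for \<xi>
  proof -
    have "(\<Prod>j\<in>I - {i0}. \<xi> \<bullet> g j) = - (\<xi> \<bullet> g i0) * (\<Prod>j\<in>J. \<xi> \<bullet> g j)"
      using J by (simp add: J_def prod.remove[of "I - {i0}" i1] opposite)
    then show ?thesis
      unfolding cofactor_sum_remove[OF I i0] cofactor_sum_remove[OF finite_Diff[OF I] J(2)]
      by (simp add: G_def J_def opposite algebra_simps)
  qed
  have "G \<xi> = 0" if "\<xi> \<bullet> g i0 \<noteq> 0" for \<xi>
    using zero[of \<xi>] factor[of \<xi>] that by simp
  moreover have "g i0 \<bullet> g i0 \<noteq> 0" using units i0 by auto
  moreover have "real_polynomial_function G"
    unfolding G_def[abs_def]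
    by (intro real_polynomial_function.intros(2,4) real_polynomial_function_diff
        real_polynomial_function_direction_product real_polynomial_function_cofactor_sum
        real_polynomial_function_inner_left J)
  then have "continuous_on UNIV G" by (rule continuous_on_real_polynomial_function)
  ultimately have "G (perp (g i0)) = 0"
    using continuous_vanishing_off_polynomial_zeros[OF real_polynomial_function_inner_left, of "g i0" "g i0" G]
    by blast
  moreover have "perp (g i0) \<bullet> g j \<noteq> 0" if j: "j \<in> J" for j
  proof
    assume "perp (g i0) \<bullet> g j = 0"
    then have "g j = g i0 \<or> g j = g i1"
      using orthogonal_perp_unit[of "g j" "g i0"] units i0 j opposite by (auto simp: J_def)
    then show False using inj i0 i1 j unfolding J_def inj_on_def by blast
  qed
  ultimately show ?thesis using J by (simp add: G_def inner_perp_self)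
qed

lemma involution_pairing_permutation:
  fixes \<sigma> :: "nat \<Rightarrow> nat"
  assumes \<sigma>: "\<And>i. i < m \<Longrightarrow> \<sigma> i < m \<and> \<sigma> i \<noteq> i \<and> \<sigma> (\<sigma> i) = i"
  obtains k p where "m = 2 * k" "p permutes {..<m}" "\<forall>i<k. p (k + i) = \<sigma> (p i)"
proof -
  define T where "T = {i. i < m \<and> i < \<sigma> i}"
  define xs where "xs = sorted_list_of_set T"
  define ys where "ys = xs @ map \<sigma> xs"
  have xs: "set xs = T" "distinct xs" by (simp_all add: xs_def T_def)
  have "inj_on \<sigma> T"
  proof (rule inj_onI)
    fix i j assume "i \<in> T" "j \<in> T" "\<sigma> i = \<sigma> j"
    then have "\<sigma> (\<sigma> i) = \<sigma> (\<sigma> j)" by simp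
    then show "i = j" using \<sigma> \<open>i \<in> T\<close> \<open>j \<in> T\<close> by (simp add: T_def)
  qed
  moreover have "T \<inter> \<sigma> ` T = {}"
  proof -
    have False if "i \<in> T" "\<sigma> i \<in> T" for i
      using that \<sigma>[of i] by (simp add: T_def)
    then show ?thesis by blast
  qed
  ultimately have "distinct ys" by (simp add: ys_def xs distinct_map)
  have "set ys = {..<m}"
  proof (intro equalityI subsetI)
    fix i assume i: "i \<in> {..<m}"
    show "i \<in> set ys"
    proof (cases "i < \<sigma> i")
      case True
      then show ?thesis using i by (simp add: ys_def xs T_def)
    next
      case False
      then have "\<sigma> i \<in> T" using i \<sigma>[of i] by (auto simp: T_def)
      moreover have "i = \<sigma> (\<sigma> i)" using i \<sigma> by simp
      ultimately show ?thesis by (simp add: ys_def xs)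
    qed
  qed (use \<sigma> in \<open>auto simp: ys_def xs T_def\<close>)
  then have len: "length ys = m" using distinct_card[OF \<open>distinct ys\<close>] by simp
  define p where "p i = (if i < m then ys ! i else i)" for i
  have "bij_betw ((!) ys) {..<m} {..<m}"
    by (rule bij_betw_nth) (use \<open>distinct ys\<close> \<open>set ys = {..<m}\<close> len in auto)
  then have "bij_betw p {..<m} {..<m}" by (rule bij_betw_cong[THEN iffD1, rotated]) (simp add: p_def)
  then have "p permutes {..<m}" by (rule bij_imp_permutes) (simp add: p_def)
  moreover have "m = 2 * length xs" using len by (simp add: ys_def)
  moreover have "p (length xs + i) = \<sigma> (p i)" if "i < length xs" for i
    using that len by (simp add: p_def ys_def nth_append)
  ultimately show thesis using that by blast
qed

lemma star_symmetric_if_partners: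
  assumes inj: "inj_on g {..<m}" and m: "m \<ge> 1" and units: "\<forall>i<m. norm (g i) = 1"
    and partner: "\<forall>i<m. \<exists>i'<m. g i' = - g i \<and> c i' = - c i"
  shows "star_symmetric m g c"
proof -
  define \<sigma> where "\<sigma> i = (THE i'. i' < m \<and> g i' = - g i)" for i
  have \<sigma>: "\<sigma> i < m \<and> g (\<sigma> i) = - g i \<and> c (\<sigma> i) = - c i" if i: "i < m" for i
  proof -
    obtain i' where i': "i' < m" "g i' = - g i" "c i' = - c i" using partner i by blast
    have "\<sigma> i = i'" unfolding \<sigma>_def
      by (rule the_equality) (use i' inj in \<open>auto simp: inj_on_def\<close>)
    then show ?thesis using i' by simp
  qed
  have "\<sigma> i < m \<and> \<sigma> i \<noteq> i \<and> \<sigma> (\<sigma> i) = i" if i: "i < m" for i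
  proof (intro conjI)
    show "\<sigma> i < m" using \<sigma>[OF i] by blast
    show "\<sigma> i \<noteq> i" using \<sigma>[OF i] unit_neq_uminus units i by metis
    have "g (\<sigma> (\<sigma> i)) = g i" using \<sigma>[OF i] \<sigma>[of "\<sigma> i"] by simp
    then show "\<sigma> (\<sigma> i) = i" using inj \<sigma>[OF i] \<sigma>[of "\<sigma> i"] i unfolding inj_on_def by blast
  qed
  then obtain k p where k: "m = 2 * k" and p: "p permutes {..<m}" and pairs: "\<forall>i<k. p (k + i) = \<sigma> (p i)"
    by (rule involution_pairing_permutation)
  have "g (p i) = - g (p (k + i)) \<and> c (p i) = - c (p (k + i))" if "i < k" for i
    using \<sigma>[of "p i"] pairs that permutes_in_image[OF p, of i] k by simp
  moreover have "k \<ge> 1" using m k by simp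
  ultimately show ?thesis unfolding star_symmetric_def using k p by blast
qed

lemma not_symmetric_imp_cofactor_sum_nonzero:
  assumes units: "\<forall>i<m. norm (g i) = 1" and inj: "inj_on g {..<m}" and m: "m \<ge> 1"
    and c: "\<forall>i<m. c i \<noteq> 0" and not_sym: "\<not> star_symmetric m g c"
  shows "\<exists>\<xi>. (\<Prod>j<m. \<xi> \<bullet> g j) \<noteq> 0 \<and> cofactor_sum {..<m} g (\<lambda>i. c i *\<^sub>R g i) \<xi> \<noteq> 0"
proof (rule ccontr)
  assume contra: "\<not> ?thesis"
  have vanish: "cofactor_sum {..<m} g (\<lambda>i. c i * g i $ k) \<xi> = 0" if "(\<Prod>j<m. \<xi> \<bullet> g j) \<noteq> 0" for \<xi> k
  proof -
    have "cofactor_sum {..<m} g (\<lambda>i. c i *\<^sub>R g i) \<xi> $ k = 0" using that contra by auto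
    then show ?thesis by (simp add: cofactor_sum_nth)
  qed
  obtain \<xi>1 where \<xi>1: "(\<Prod>j<m. \<xi>1 \<bullet> g j) \<noteq> 0"
    using exists_direction_product_nonzero[of "{..<m}" g] units by force
  have zero: "cofactor_sum {..<m} g (\<lambda>i. c i * g i $ k) \<xi> = 0" for \<xi> k
  proof -
    have "continuous_on UNIV (cofactor_sum {..<m} g (\<lambda>i. c i * g i $ k))"
      by (simp add: continuous_on_real_polynomial_function real_polynomial_function_cofactor_sum)
    then show ?thesis
      using continuous_vanishing_off_polynomial_zeros[OF real_polynomial_function_direction_product \<xi>1] vanish
      by blast
  qed
  have "\<exists>i'<m. g i' = - g i \<and> c i' = - c i" if i: "i < m" for i
  proof (cases "\<exists>i'<m. g i' = - g i")
    case True
    then obtain i' where i': "i' < m" "g i' = - g i" by blast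
    have "c i' * g i' $ k = c i * g i $ k" for k
      using cofactor_sum_zero_paired[OF zero[of k]] units inj i i' by auto
    then have "c i' *\<^sub>R g i' = c i *\<^sub>R g i" by (simp add: vec2_eq_iff)
    then have "(c i' + c i) *\<^sub>R g i = 0" using i'(2) by (simp add: scaleR_add_left) (metis add.right_inverse)
    then have "c i' = - c i" using units i by auto
    then show ?thesis using i' by blast
  next
    case False
    then have "c i * g i $ k = 0" for k
      using cofactor_sum_zero_unpaired[OF zero[of k]] units inj i by auto
    then have "c i *\<^sub>R g i = 0" by (simp add: vec2_eq_iff)
    then show ?thesis using c units i by auto
  qed
  then show False using star_symmetric_if_partners[OF inj m units] not_sym by blast
qed

section \<open>Ray transforms\<close>

lemma csupp_on_line:
  fixes h :: "'a::real_normed_vector \<Rightarrow> real"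
  assumes h: "csupp R h" and g: "norm g = 1"
  shows "csupp (R + norm x) (\<lambda>t. h (x + t *\<^sub>R g))"
  unfolding csupp_def
proof (intro conjI allI impI)
  show "continuous_on UNIV (\<lambda>t. h (x + t *\<^sub>R g))"
    by (rule continuous_on_compose2[OF csupp_continuous_on[OF h]]) (auto intro!: continuous_intros)
  show "0 \<le> R + norm x" using csupp_radius_nonneg[OF h] by simp
  fix t :: real assume "R + norm x \<le> norm t"
  moreover have "norm (t *\<^sub>R g) \<le> norm (x + t *\<^sub>R g) + norm x"
    by (metis add.commute add_diff_cancel norm_triangle_ineq4)
  ultimately show "h (x + t *\<^sub>R g) = 0" using g csupp_zero[OF h] by simp
qed

lemma csupp_integral_atLeast:
  fixes f :: "real \<Rightarrow> real"
  assumes f: "csupp R f" and T: "R \<le> T"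
  shows "integral {0..} f = integral {0..T} f"
proof -
  have "(f has_integral integral {0..T} f) {0..T}"
    by (intro integrable_integral integrable_continuous_interval csupp_continuous_on[OF f])
  moreover have "(f has_integral 0) {T..}"
    by (rule has_integral_is_0) (use csupp_zero[OF f] T in auto)
  moreover have "0 \<le> T" using csupp_radius_nonneg[OF f] T by simp
  ultimately have "(f has_integral integral {0..T} f) ({0..T} \<union> {T..})"
    using has_integral_Un[of f _ "{0..T}" 0 "{T..}"] by (auto simp: Int_commute)
  moreover have "{0..T} \<union> {T..} = {0..}" using \<open>0 \<le> T\<close> by auto
  ultimately show ?thesis by (simp add: integral_unique)
qed

lemma ray_transform_eq_integral:
  assumes "csupp R h" "norm g = 1" "R + norm x \<le> T"
  shows "ray_transform g h x = integral {0..T} (\<lambda>t. h (x + t *\<^sub>R g))"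
  unfolding ray_transform_def by (rule csupp_integral_atLeast[OF csupp_on_line[OF assms(1,2)] assms(3)])

lemma ray_transform_diff:
  assumes "csupp R h1" "csupp R h2" "norm g = 1"
  shows "ray_transform g (\<lambda>y. h1 y - h2 y) x = ray_transform g h1 x - ray_transform g h2 x"
  unfolding ray_transform_eq_integral[OF csupp_diff[OF assms(1,2)] assms(3) order_refl]
    ray_transform_eq_integral[OF assms(1,3) order_refl] ray_transform_eq_integral[OF assms(2,3) order_refl]
  by (intro integral_diff integrable_continuous_interval
      csupp_continuous_on[OF csupp_on_line[OF assms(1,3)]] csupp_continuous_on[OF csupp_on_line[OF assms(2,3)]])

lemma ray_transform_sub_shift:
  assumes h: "csupp R h" and g: "norm g = 1" and s: "0 \<le> s"
  shows "ray_transform g h x - ray_transform g h (x + s *\<^sub>R g) = segment_integral g s h x"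
proof -
  let ?f = "\<lambda>t. h (x + t *\<^sub>R g)"
  define T where "T = R + norm x + s"
  have cont: "continuous_on S ?f" for S using csupp_on_line[OF h g] csupp_continuous_on by blast
  have "0 \<le> T" unfolding T_def using csupp_radius_nonneg[OF h] s by simp
  have "norm (x + s *\<^sub>R g) \<le> norm x + s" using norm_triangle_ineq[of x "s *\<^sub>R g"] g s by simp
  then have "ray_transform g h (x + s *\<^sub>R g) = integral {0..T} (\<lambda>t. ?f (t + s))"
    using ray_transform_eq_integral[OF h g, of "x + s *\<^sub>R g" T] by (simp add: T_def scaleR_add_left add_ac)
  also have "\<dots> = integral {s..T + s} ?f"
    using integral_shift[of 0 s T ?f] cont by (simp add: o_def)
  finally have "ray_transform g h (x + s *\<^sub>R g) = integral {s..T + s} ?f" .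
  moreover have "ray_transform g h x = integral {0..s} ?f + integral {s..T + s} ?f"
    using ray_transform_eq_integral[OF h g, of x "T + s"] s \<open>0 \<le> T\<close>
    by (simp add: T_def Henstock_Kurzweil_Integration.integral_combine integrable_continuous_interval cont)
  ultimately show ?thesis by (simp add: segment_integral_def)
qed

lemma ray_transform_add_opposite:
  assumes h: "csupp R h" and g: "norm g = 1"
  shows "ray_transform g h x + ray_transform (- g) h x = integral UNIV (\<lambda>t. h (x + t *\<^sub>R g))"
proof -
  let ?f = "\<lambda>t. h (x + t *\<^sub>R g)"
  define T where "T = R + norm x"
  have f: "csupp T ?f" unfolding T_def by (rule csupp_on_line[OF h g])
  have "0 \<le> T" using csupp_radius_nonneg[OF f] .
  have "ray_transform (- g) h x = integral {0..T} (\<lambda>t. ?f (- t))"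
    using ray_transform_eq_integral[OF h, of "- g" x T] g by (simp add: T_def)
  also have "\<dots> = integral {-T..0} ?f"
    using Henstock_Kurzweil_Integration.integral_reflect_real[of 0 "-T" ?f] by simp
  finally have "ray_transform g h x + ray_transform (- g) h x = integral {-T..0} ?f + integral {0..T} ?f"
    using ray_transform_eq_integral[OF h g, of x T] by (simp add: T_def)
  also have "\<dots> = integral {-T..T} ?f"
    using \<open>0 \<le> T\<close> csupp_continuous_on[OF f]
    by (simp add: Henstock_Kurzweil_Integration.integral_combine integrable_continuous_interval)
  also have "\<dots> = integral UNIV ?f"
    using csupp_integral_cbox[OF f, of "-T" T] by (simp add: cbox_interval cball_eq_atLeastAtMost)
  finally show ?thesis .
qed

section \<open>\<open>C\<^sup>2\<close> functions\<close>

lemma C2_continuous_on: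
  assumes "C2 h"
  shows "continuous_on S h"
proof -
  have "continuous (at x) h" for x
    using assms differentiable_imp_continuous_within unfolding C2_def by blast
  then show ?thesis by (simp add: continuous_at_imp_continuous_on)
qed

lemma C2c_disc_imp_csupp:
  assumes "0 \<le> r" "C2c_disc r h"
  shows "csupp r h"
  unfolding csupp_def
proof (intro conjI allI impI)
  show "continuous_on UNIV h" using assms(2) C2_continuous_on unfolding C2c_disc_def by blast
  fix x :: "real^2" assume "r \<le> norm x"
  then have "x \<notin> support h" using assms(2) unfolding C2c_disc_def by (auto dest: subsetD)
  then show "h x = 0" unfolding support_def using closure_subset[of "{x. h x \<noteq> 0}"] by blast
qed (use assms(1) in simp)

lemma has_real_derivative_pos_part_power:
  fixes t :: real
  assumes n: "2 \<le> n"
  shows "((\<lambda>s. max s 0 ^ n) has_real_derivative real n * max t 0 ^ (n - 1)) (at t)"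
proof -
  consider "t > 0" | "t < 0" | "t = 0" by linarith
  then show ?thesis
  proof cases
    case 1
    have "((\<lambda>s. s ^ n) has_real_derivative real n * max t 0 ^ (n - 1)) (at t)"
      using DERIV_pow[of n t] 1 by simp
    then show ?thesis
      by (rule has_field_derivative_transform_within_open[where S="{0<..}"]) (use 1 in auto)
  next
    case 2
    have "((\<lambda>s. 0) has_real_derivative real n * max t 0 ^ (n - 1)) (at t)"
      using 2 n by (simp add: power_0_left)
    then show ?thesis
      by (rule has_field_derivative_transform_within_open[where S="{..<0}"]) (use 2 n in auto)
  next
    case 3
    have bound: "norm ((max y 0 ^ n - max 0 0 ^ n) / (y - 0)) \<le> \<bar>y\<bar> ^ (n - 1)" for y :: real
    proof -
      have "\<bar>max y 0\<bar> ^ n \<le> \<bar>y\<bar> ^ n" by (intro power_mono) auto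
      also have "\<dots> = \<bar>y\<bar> ^ (n - 1) * \<bar>y\<bar>" using n by (simp flip: power_Suc2)
      finally show ?thesis using n by (cases "y = 0") (simp_all add: abs_divide power_abs divide_le_eq power_0_left)
    qed
    have "\<forall>\<^sub>F y in at (0::real). norm ((max y 0 ^ n - max 0 0 ^ n) / (y - 0)) \<le> \<bar>y\<bar> ^ (n - 1)"
      using bound by (simp add: always_eventually)
    moreover have "((\<lambda>y::real. \<bar>y\<bar> ^ (n - 1)) \<longlongrightarrow> 0) (at 0)"
      using n by (auto intro!: tendsto_eq_intros)
    ultimately have "((\<lambda>y::real. (max y 0 ^ n - max 0 0 ^ n) / (y - 0)) \<longlongrightarrow> 0) (at 0)"
      by (rule Lim_null_comparison)
    then show ?thesis using 3 n by (simp add: has_field_derivative_iff power_0_left)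
  qed
qed

lemma pderiv2_eq:
  assumes "\<And>x. (f has_derivative D x) (at x)"
  shows "pderiv2 f j = (\<lambda>x. D x (axis j 1))"
  unfolding pderiv2_def using frechet_derivative_at[OF assms] by (auto simp: fun_eq_iff)

definition bump :: "real \<Rightarrow> real^2 \<Rightarrow> real" where
  "bump \<rho> x = max (\<rho>\<^sup>2 - x \<bullet> x) 0 ^ 3"

lemma has_derivative_pos_part_power_radial:
  assumes "2 \<le> n"
  shows "((\<lambda>x. max (\<rho>\<^sup>2 - x \<bullet> x) 0 ^ n) has_derivative
    (\<lambda>h. - (2 * (x \<bullet> h)) * (real n * max (\<rho>\<^sup>2 - x \<bullet> x) 0 ^ (n - 1)))) (at x)"
proof -
  have "((\<lambda>x. \<rho>\<^sup>2 - x \<bullet> x) has_derivative (\<lambda>h. - (2 * (x \<bullet> h)))) (at x)"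
    by (auto intro!: derivative_eq_intros simp: inner_commute)
  then show ?thesis
    by (rule DERIV_compose_FDERIV[OF has_real_derivative_pos_part_power[OF assms]])
qed

lemma pderiv2_bump:
  "pderiv2 (bump \<rho>) j = (\<lambda>x. - (6 * (x \<bullet> axis j 1)) * max (\<rho>\<^sup>2 - x \<bullet> x) 0 ^ 2)"
  unfolding bump_def[abs_def]
  by (subst pderiv2_eq[OF has_derivative_pos_part_power_radial]) (simp_all add: algebra_simps)

lemma C2_bump: "C2 (bump \<rho>)"
proof -
  have lin: "((\<lambda>x. - (6 * (x \<bullet> axis j 1))) has_derivative (\<lambda>h. - (6 * (h \<bullet> axis j 1)))) (at x)"
    for j and x :: "real^2"
    by (intro derivative_intros)
  note d2 = has_derivative_mult[OF lin has_derivative_pos_part_power_radial[of 2, OF order_refl]]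
  show ?thesis
    unfolding C2_def pderiv2_bump pderiv2_eq[OF d2]
  proof (intro conjI allI)
    show "bump \<rho> differentiable (at x)" for x
      unfolding bump_def[abs_def] differentiable_def
      using has_derivative_pos_part_power_radial[of 3] by auto
    show "(\<lambda>x. - (6 * (x \<bullet> axis j 1)) * max (\<rho>\<^sup>2 - x \<bullet> x) 0 ^ 2) differentiable (at x)"
      for j :: 2 and x :: "real^2"
      using d2 unfolding differentiable_def by blast
  qed (intro continuous_intros)
qed

lemma bump_eq_zero: "0 \<le> \<rho> \<Longrightarrow> \<rho> \<le> norm x \<Longrightarrow> bump \<rho> x = 0"
  unfolding bump_def using power_mono[of \<rho> "norm x" 2] by (simp add: dot_square_norm)

lemma csupp_bump: "0 < \<rho> \<Longrightarrow> csupp \<rho> (bump \<rho>)"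
  unfolding csupp_def using C2_continuous_on[OF C2_bump] bump_eq_zero[of \<rho>] by auto

lemma bump_at_0: "0 < \<rho> \<Longrightarrow> bump \<rho> 0 \<noteq> 0"
  unfolding bump_def by simp

lemma has_derivative_translate:
  "(h has_derivative D) (at (x + a)) \<Longrightarrow> ((\<lambda>x. h (x + a)) has_derivative D) (at x)"
  using has_derivative_compose[of "\<lambda>x. x + a" "\<lambda>y. y" x UNIV h D] by (simp add: has_derivative_add_const)

lemma differentiable_translate:
  "h differentiable (at (x + a)) \<Longrightarrow> (\<lambda>x. h (x + a)) differentiable (at x)"
  unfolding differentiable_def using has_derivative_translate by blast

lemma pderiv2_translate:
  assumes "\<forall>x. h differentiable (at x)"
  shows "pderiv2 (\<lambda>x. h (x + a)) j = (\<lambda>x. pderiv2 h j (x + a))"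
proof -
  have "((\<lambda>x. h (x + a)) has_derivative frechet_derivative h (at (x + a))) (at x)" for x
    using assms frechet_derivative_works has_derivative_translate by blast
  then have "pderiv2 (\<lambda>x. h (x + a)) j = (\<lambda>x. frechet_derivative h (at (x + a)) (axis j 1))"
    by (rule pderiv2_eq)
  then show ?thesis by (simp add: pderiv2_def)
qed

lemma pderiv2_diff:
  assumes "\<forall>x. h1 differentiable (at x)" "\<forall>x. h2 differentiable (at x)"
  shows "pderiv2 (\<lambda>x. h1 x - h2 x) j = (\<lambda>x. pderiv2 h1 j x - pderiv2 h2 j x)"
proof -
  have "((\<lambda>x. h1 x - h2 x) has_derivative
      (\<lambda>y. frechet_derivative h1 (at x) y - frechet_derivative h2 (at x) y)) (at x)" for x
    using assms frechet_derivative_works by (blast intro: has_derivative_diff)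
  then have "pderiv2 (\<lambda>x. h1 x - h2 x) j
      = (\<lambda>x. frechet_derivative h1 (at x) (axis j 1) - frechet_derivative h2 (at x) (axis j 1))"
    by (rule pderiv2_eq)
  then show ?thesis by (simp add: pderiv2_def)
qed

lemma C2_translate:
  assumes "C2 h"
  shows "C2 (\<lambda>x. h (x + a))"
proof -
  have d: "\<forall>x. h differentiable (at x)" and dj: "\<forall>x. pderiv2 h j differentiable (at x)"
    and c: "continuous_on UNIV (pderiv2 (pderiv2 h j) k)" for j k
    using assms unfolding C2_def by auto
  show ?thesis
    unfolding C2_def pderiv2_translate[OF d] pderiv2_translate[OF dj]
  proof (intro conjI allI)
    show "(\<lambda>x. h (x + a)) differentiable (at x)" for x :: "real^2"
      using d differentiable_translate by blast
    show "(\<lambda>x. pderiv2 h j (x + a)) differentiable (at x)" for j and x :: "real^2"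
      using dj differentiable_translate by blast
    show "continuous_on UNIV (\<lambda>x. pderiv2 (pderiv2 h j) k (x + a))" for j k
      by (rule continuous_on_compose2[OF c]) (auto intro!: continuous_intros)
  qed
qed

lemma C2_diff:
  assumes "C2 h1" "C2 h2"
  shows "C2 (\<lambda>x. h1 x - h2 x)"
proof -
  have d: "\<forall>x. h1 differentiable (at x)" "\<forall>x. h2 differentiable (at x)"
    and dj: "\<forall>x. pderiv2 h1 j differentiable (at x)" "\<forall>x. pderiv2 h2 j differentiable (at x)"
    and c: "continuous_on UNIV (pderiv2 (pderiv2 h1 j) k)" "continuous_on UNIV (pderiv2 (pderiv2 h2 j) k)"
    for j k
    using assms unfolding C2_def by auto
  show ?thesis
    unfolding C2_def pderiv2_diff[OF d] pderiv2_diff[OF dj]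
    using d dj by (auto intro!: differentiable_diff continuous_intros c)
qed

lemma C2_zero: "C2 (\<lambda>x. 0)"
  unfolding C2_def pderiv2_eq[of "\<lambda>x. 0" "\<lambda>x y. 0", OF has_derivative_const] by simp

lemma C2_fin_diff:
  assumes "finite J" "C2 \<phi>"
  shows "C2 (fin_diff J a \<phi>)"
  using assms(1)
proof (induction J rule: finite_induct)
  case (insert i J)
  have "fin_diff (insert i J) a \<phi> = (\<lambda>x. fin_diff J a \<phi> x - fin_diff J a \<phi> (x + a i))"
    by (rule ext) (rule fin_diff_insert[OF insert(1,2)])
  then show ?case using C2_diff[OF insert(3) C2_translate[OF insert(3)]] by simp
qed (use assms(2) in simp)

lemma C2c_disc_if_csupp:
  assumes "C2 h" "csupp R h" "R < r"
  shows "C2c_disc r h"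
proof -
  have "{x. h x \<noteq> 0} \<subseteq> cball 0 R" using csupp_zero[OF assms(2)] by force
  then have "support h \<subseteq> cball 0 R" unfolding support_def by (rule closure_minimal) simp
  then show ?thesis
    unfolding C2c_disc_def using assms(1,3) bounded_subset[OF bounded_cball] closed_closure
    by (auto simp: support_def compact_eq_bounded_closed)
qed

section \<open>Injectivity in the non-symmetric case\<close>

lemma prod_remove_mult_divide:
  fixes e l :: "'i \<Rightarrow> 'a::field"
  assumes "finite I" "i \<in> I" "\<forall>j\<in>I. l j \<noteq> 0"
  shows "(\<Prod>j\<in>I - {i}. e j) * (e i / l i) = (\<Prod>j\<in>I. e j) / (\<Prod>j\<in>I. l j) * (\<Prod>j\<in>I - {i}. l j)"
  using assms by (simp add: prod.remove[of I i] field_simps)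

lemma laplace_fin_diff_segment_integral:
  fixes g :: "'i \<Rightarrow> 'a::euclidean_space"
  assumes u: "csupp R u" and I: "finite I" "i \<in> I" and \<xi>: "\<forall>j\<in>I. \<xi> \<bullet> g j \<noteq> 0"
  shows "laplace (fin_diff (I - {i}) g (segment_integral (g i) 1 u)) \<xi>
    = (\<Prod>j\<in>I. 1 - exp (- (\<xi> \<bullet> g j))) / (\<Prod>j\<in>I. \<xi> \<bullet> g j) * (\<Prod>j\<in>I - {i}. \<xi> \<bullet> g j) * laplace u \<xi>"
proof -
  have "laplace (fin_diff (I - {i}) g (segment_integral (g i) 1 u)) \<xi>
      = ((\<Prod>j\<in>I - {i}. 1 - exp (- (\<xi> \<bullet> g j))) * ((1 - exp (- (\<xi> \<bullet> g i))) / (\<xi> \<bullet> g i))) * laplace u \<xi>"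
    using laplace_fin_diff[OF csupp_segment_integral[OF u zero_le_one, where g="g i"], where J="I - {i}" and a=g]
      laplace_segment_integral[OF u zero_le_one, of \<xi> "g i"] \<xi> I
    by simp
  also have "\<dots> = (\<Prod>j\<in>I. 1 - exp (- (\<xi> \<bullet> g j))) / (\<Prod>j\<in>I. \<xi> \<bullet> g j) * (\<Prod>j\<in>I - {i}. \<xi> \<bullet> g j) * laplace u \<xi>"
    by (subst prod_remove_mult_divide[of I i "\<lambda>j. \<xi> \<bullet> g j" "\<lambda>j. 1 - exp (- (\<xi> \<bullet> g j))"]) (use \<xi> I in auto)
  finally show ?thesis .
qed

text \<open>Differencing in all the directions turns each ray transform into an integral over a unit
  segment, which is compactly supported, so that the exponential transform can be applied.\<close>

lemma weighted_ray_sum_zero_imp_segment_sum_zero: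
  fixes m :: nat
  assumes units: "\<forall>i<m. norm (g i) = 1" and u: "\<And>i. i < m \<Longrightarrow> csupp R (u i)"
    and zero: "\<And>x. (\<Sum>i<m. c i * ray_transform (g i) (u i) x) = 0"
  shows "(\<Sum>i<m. c i * fin_diff ({..<m} - {i}) g (segment_integral (g i) 1 (u i)) x) = 0"
proof -
  have "0 = fin_diff {..<m} g (\<lambda>y. \<Sum>i<m. c i * ray_transform (g i) (u i) y) x"
    using zero by simp
  also have "\<dots> = (\<Sum>i<m. c i * fin_diff {..<m} g (ray_transform (g i) (u i)) x)"
    by (rule fin_diff_linear_comb)
  also have "\<dots> = (\<Sum>i<m. c i * fin_diff ({..<m} - {i}) g (segment_integral (g i) 1 (u i)) x)"
  proof (intro sum.cong refl arg_cong[where f="(*) _"])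
    fix i assume i: "i \<in> {..<m}"
    have "ray_transform (g i) (u i) y - ray_transform (g i) (u i) (y + g i)
        = segment_integral (g i) 1 (u i) y" for y
      using ray_transform_sub_shift[OF u, where g="g i" and s=1 and x=y] units i by simp
    then show "fin_diff {..<m} g (ray_transform (g i) (u i)) x
        = fin_diff ({..<m} - {i}) g (segment_integral (g i) 1 (u i)) x"
      using fin_diff_remove[of "{..<m}" i g _ x] i by simp
  qed
  finally show ?thesis by simp
qed

lemma laplace_cofactor_identity:
  fixes m :: nat
  assumes units: "\<forall>i<m. norm (g i) = 1" and u: "\<And>i. i < m \<Longrightarrow> csupp R (u i)"
    and zero: "\<And>x. (\<Sum>i<m. c i * ray_transform (g i) (u i) x) = 0"
    and \<xi>: "\<forall>j<m. \<xi> \<bullet> g j \<noteq> 0"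
  shows "cofactor_sum {..<m} g (\<lambda>i. c i * laplace (u i) \<xi>) \<xi> = 0"
proof -
  let ?P = "\<Prod>j<m. 1 - exp (- (\<xi> \<bullet> g j))" and ?Q = "\<Prod>j<m. \<xi> \<bullet> g j"
  define W where "W i = fin_diff ({..<m} - {i}) g (segment_integral (g i) 1 (u i))" for i
  have W_csupp: "csupp (R + 1 + (\<Sum>j\<in>{..<m} - {i}. norm (g j))) (W i)" if "i < m" for i
    unfolding W_def using csupp_segment_integral[OF u[OF that], of 1 "g i"] units that
    by (intro csupp_fin_diff) auto
  have "0 = laplace (\<lambda>x. \<Sum>i<m. c i * W i x) \<xi>"
    using weighted_ray_sum_zero_imp_segment_sum_zero[OF units u zero] by (simp add: W_def laplace_def)
  also have "\<dots> = (\<Sum>i<m. c i * laplace (W i) \<xi>)"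
    using W_csupp by (intro laplace_linear_comb) auto
  also have "\<dots> = (\<Sum>i<m. c i * (?P / ?Q * (\<Prod>j\<in>{..<m} - {i}. \<xi> \<bullet> g j) * laplace (u i) \<xi>))"
  proof (intro sum.cong refl arg_cong[where f="(*) _"])
    fix i assume "i \<in> {..<m}"
    then show "laplace (W i) \<xi> = ?P / ?Q * (\<Prod>j\<in>{..<m} - {i}. \<xi> \<bullet> g j) * laplace (u i) \<xi>"
      unfolding W_def using laplace_fin_diff_segment_integral[OF u finite_lessThan] \<xi> by simp
  qed
  also have "\<dots> = ?P / ?Q * cofactor_sum {..<m} g (\<lambda>i. c i * laplace (u i) \<xi>) \<xi>"
    unfolding cofactor_sum_def by (simp add: sum_distrib_left algebra_simps)
  finally have "0 = ?P / ?Q * cofactor_sum {..<m} g (\<lambda>i. c i * laplace (u i) \<xi>) \<xi>" .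
  moreover have "?P \<noteq> 0" "?Q \<noteq> 0" using \<xi> by auto
  ultimately show ?thesis by simp
qed

lemma csupp_inner:
  fixes f :: "'a::real_normed_vector \<Rightarrow> real^'n"
  assumes f: "\<And>k. csupp R (\<lambda>x. f x $ k)"
  shows "csupp R (\<lambda>x. f x \<bullet> v)"
  unfolding inner_vec_def inner_real_def
  by (intro csupp_sum csupp_mult_continuous f continuous_on_const csupp_radius_nonneg[OF f]) simp

lemma laplace_inner:
  fixes f :: "'a::euclidean_space \<Rightarrow> real^'n"
  assumes f: "\<And>k. csupp R (\<lambda>x. f x $ k)"
  shows "laplace (\<lambda>x. f x \<bullet> v) \<xi> = v \<bullet> (\<chi> k. laplace (\<lambda>x. f x $ k) \<xi>)"
proof -
  have "laplace (\<lambda>x. f x \<bullet> v) \<xi> = laplace (\<lambda>x. \<Sum>k\<in>UNIV. v $ k * f x $ k) \<xi>"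
    by (simp add: inner_vec_def mult.commute)
  also have "\<dots> = (\<Sum>k\<in>UNIV. v $ k * laplace (\<lambda>x. f x $ k) \<xi>)"
    using f by (intro laplace_linear_comb) auto
  finally show ?thesis by (simp add: inner_vec_def)
qed

lemma star_transform_nth:
  "star_transform m g c f x $ 1 = (\<Sum>i<m. c i * ray_transform (g i) (\<lambda>y. f y \<bullet> g i) x)"
  "star_transform m g c f x $ 2 = (\<Sum>i<m. c i * ray_transform (g i) (\<lambda>y. f y \<bullet> perp (g i)) x)"
  unfolding star_transform_def by simp_all

lemma star_transform_kernel_laplace:
  fixes m :: nat
  assumes units: "\<forall>i<m. norm (g i) = 1" and f: "\<And>k. csupp R (\<lambda>x. f x $ k)"
    and S: "star_transform m g c f = (\<lambda>x. 0)" and \<xi>: "\<forall>j<m. \<xi> \<bullet> g j \<noteq> 0"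
  shows "cofactor_sum {..<m} g (\<lambda>i. c i *\<^sub>R g i) \<xi> = 0 \<or> (\<chi> k. laplace (\<lambda>x. f x $ k) \<xi>) = 0"
proof -
  define F where "F = (\<chi> k. laplace (\<lambda>x. f x $ k) \<xi>)"
  have orth: "cofactor_sum {..<m} g (\<lambda>i. c i *\<^sub>R w i) \<xi> \<bullet> F = 0"
    if "\<And>x. (\<Sum>i<m. c i * ray_transform (g i) (\<lambda>y. f y \<bullet> w i) x) = 0" for w
  proof -
    have "cofactor_sum {..<m} g (\<lambda>i. c i * laplace (\<lambda>y. f y \<bullet> w i) \<xi>) \<xi> = 0"
      by (rule laplace_cofactor_identity[OF units csupp_inner[OF f] that \<xi>])
    then show ?thesis by (simp add: cofactor_sum_inner laplace_inner[OF f] F_def)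
  qed
  have "cofactor_sum {..<m} g (\<lambda>i. c i *\<^sub>R g i) \<xi> \<bullet> F = 0"
    using orth[of g] S star_transform_nth(1) by (metis zero_index)
  moreover have "perp (cofactor_sum {..<m} g (\<lambda>i. c i *\<^sub>R g i) \<xi>) \<bullet> F = 0"
    using orth[of "\<lambda>i. perp (g i)"] S star_transform_nth(2)
    by (simp add: perp_cofactor_sum linear_scale[OF linear_perp]) (metis zero_index)
  ultimately show ?thesis using orthogonal_vec_and_perp_imp_zero unfolding F_def by blast
qed

lemma star_transform_eq_zero_imp_zero:
  fixes m :: nat
  assumes units: "\<forall>i<m. norm (g i) = 1" and inj: "inj_on g {..<m}" and m: "m \<ge> 1"
    and c: "\<forall>i<m. c i \<noteq> 0" and not_sym: "\<not> star_symmetric m g c"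
    and f: "\<And>k. csupp R (\<lambda>x. f x $ k)" and S: "star_transform m g c f = (\<lambda>x. 0)"
  shows "f x = 0"
proof -
  obtain \<xi>0 where Q0: "(\<Prod>j<m. \<xi>0 \<bullet> g j) \<noteq> 0" and A0: "cofactor_sum {..<m} g (\<lambda>i. c i *\<^sub>R g i) \<xi>0 \<noteq> 0"
    using not_symmetric_imp_cofactor_sum_nonzero[OF units inj m c not_sym] by blast
  then obtain k0 where "cofactor_sum {..<m} g (\<lambda>i. c i *\<^sub>R g i) \<xi>0 $ k0 \<noteq> 0"
    by (auto simp: vec_eq_iff)
  then have A0k: "cofactor_sum {..<m} g (\<lambda>i. c i * g i $ k0) \<xi>0 \<noteq> 0" by (simp add: cofactor_sum_nth)
  define P where "P \<xi> = (\<Prod>j<m. \<xi> \<bullet> g j) * cofactor_sum {..<m} g (\<lambda>i. c i * g i $ k0) \<xi>" for \<xi>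
  have P: "real_polynomial_function P"
    unfolding P_def[abs_def]
    by (intro real_polynomial_function.intros(4) real_polynomial_function_direction_product
        real_polynomial_function_cofactor_sum finite_lessThan)
  have "laplace (\<lambda>x. f x $ k) \<xi> = 0" if "P \<xi> \<noteq> 0" for \<xi> k
  proof -
    have "\<forall>j<m. \<xi> \<bullet> g j \<noteq> 0" using that by (auto simp: P_def)
    moreover have "cofactor_sum {..<m} g (\<lambda>i. c i *\<^sub>R g i) \<xi> \<noteq> 0"
    proof
      assume "cofactor_sum {..<m} g (\<lambda>i. c i *\<^sub>R g i) \<xi> = 0"
      then have "cofactor_sum {..<m} g (\<lambda>i. c i *\<^sub>R g i) \<xi> $ k0 = 0" by simp
      then show False using that by (simp add: P_def cofactor_sum_nth)
    qed
    ultimately have "(\<chi> k. laplace (\<lambda>x. f x $ k) \<xi>) = 0"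
      using star_transform_kernel_laplace[OF units f S] by blast
    then show ?thesis by (metis vec_lambda_beta zero_index)
  qed
  then have "laplace (\<lambda>x. f x $ k) \<xi> = 0" for \<xi> k
    using continuous_vanishing_off_polynomial_zeros[OF P, of \<xi>0] Q0 A0k continuous_on_laplace[OF f]
    by (auto simp: P_def)
  then have "f x $ k = 0" for k by (rule laplace_eq_zero_imp_zero[OF f])
  then show ?thesis by (simp add: vec_eq_iff)
qed

lemma star_transform_diff:
  fixes m :: nat
  assumes units: "\<forall>i<m. norm (g i) = 1"
    and f1: "\<And>k. csupp R (\<lambda>x. f1 x $ k)" and f2: "\<And>k. csupp R (\<lambda>x. f2 x $ k)"
  shows "star_transform m g c (\<lambda>x. f1 x - f2 x) x = star_transform m g c f1 x - star_transform m g c f2 x"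
proof -
  have "ray_transform (g i) (\<lambda>y. (f1 y - f2 y) \<bullet> v) x
      = ray_transform (g i) (\<lambda>y. f1 y \<bullet> v) x - ray_transform (g i) (\<lambda>y. f2 y \<bullet> v) x" if "i < m" for i v
    using ray_transform_diff[OF csupp_inner[OF f1] csupp_inner[OF f2]] units that by (simp add: inner_diff_left)
  then show ?thesis
    by (simp add: vec2_eq_iff star_transform_nth sum_subtractf right_diff_distrib)
qed

theorem star_invertible_if_not_symmetric:
  assumes r: "r > 0" and m: "m \<ge> 1" and units: "\<forall>i<m. norm (g i) = 1"
    and inj: "inj_on g {..<m}" and c: "\<forall>i<m. c i \<noteq> 0" and not_sym: "\<not> star_symmetric m g c"
  shows "star_invertible r m g c"
  unfolding star_invertible_def
proof (intro allI impI)
  fix f1 f2 :: "real^2 \<Rightarrow> real^2"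
  assume "admissible_field r f1" "admissible_field r f2"
  then have f1: "csupp r (\<lambda>x. f1 x $ k)" and f2: "csupp r (\<lambda>x. f2 x $ k)" for k
    using r C2c_disc_imp_csupp unfolding admissible_field_def by auto
  assume "star_transform m g c f1 = star_transform m g c f2"
  then have S: "star_transform m g c (\<lambda>x. f1 x - f2 x) = (\<lambda>x. 0)"
    using star_transform_diff[OF units f1 f2] by auto
  have "csupp r (\<lambda>x. (f1 x - f2 x) $ k)" for k using csupp_diff[OF f1 f2] by simp
  then have "f1 x - f2 x = 0" for x by (rule star_transform_eq_zero_imp_zero[OF units inj m c not_sym _ S])
  then show "f1 = f2" by auto
qed

section \<open>Non-injectivity in the symmetric case\<close>

lemma ray_transform_add_opposite_diff_shift:
  assumes h: "csupp R h" and g: "norm g = 1"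
  shows "ray_transform g (\<lambda>y. h y - h (y + s *\<^sub>R g)) x + ray_transform (- g) (\<lambda>y. h y - h (y + s *\<^sub>R g)) x = 0"
proof -
  let ?f = "\<lambda>t. h (x + t *\<^sub>R g)"
  have f: "csupp (R + norm x) ?f" by (rule csupp_on_line[OF h g])
  have "csupp (R + norm (s *\<^sub>R g)) (\<lambda>y. h (y + s *\<^sub>R g))" by (rule csupp_translate[OF h])
  then have "csupp (R + norm (s *\<^sub>R g)) (\<lambda>y. h y - h (y + s *\<^sub>R g))"
    using csupp_diff csupp_mono[OF h] by (metis le_add_same_cancel1 norm_ge_zero)
  then have "ray_transform g (\<lambda>y. h y - h (y + s *\<^sub>R g)) x + ray_transform (- g) (\<lambda>y. h y - h (y + s *\<^sub>R g)) x
      = integral UNIV (\<lambda>t. ?f t - ?f (t + s))"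
    using ray_transform_add_opposite[OF _ g] by (simp add: scaleR_add_left add.assoc)
  also have "\<dots> = integral UNIV ?f - integral UNIV (\<lambda>t. ?f (t + s))"
    by (intro integral_diff csupp_integrable[OF f] csupp_integrable[OF csupp_translate[OF f]])
  also have "\<dots> = 0" by (simp add: csupp_integral_translate[OF f])
  finally show ?thesis .
qed

text \<open>Shifting a bump successively along \<open>s d\<^sub>0, \<dots>, s d\<^sub>k\<^sub>-\<^sub>1\<close> produces a function which, in each
  direction \<open>d\<^sub>i\<close>, is a difference of a function and its translate along \<open>d\<^sub>i\<close>.\<close>

lemma exists_line_integral_free:
  fixes d :: "nat \<Rightarrow> real^2"
  assumes r: "0 < r" and d: "\<forall>i<k. norm (d i) = 1"
  obtains \<psi> where "C2c_disc r \<psi>" "\<exists>x. \<psi> x \<noteq> 0"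
    "\<forall>i<k. \<forall>x. ray_transform (d i) \<psi> x + ray_transform (- d i) \<psi> x = 0"
proof -
  define \<rho> where "\<rho> = r / 2"
  define s where "s = r / (2 * (real k + 1))"
  define \<psi> where "\<psi> = fin_diff {..<k} (\<lambda>i. s *\<^sub>R d i) (bump \<rho>)"
  have \<rho>: "0 < \<rho>" and s: "0 < s" using r by (simp_all add: \<rho>_def s_def)
  have "csupp (\<rho> + real k * s) \<psi>"
    using csupp_fin_diff[OF csupp_bump[OF \<rho>], of "{..<k}" "\<lambda>i. s *\<^sub>R d i"] d s by (simp add: \<psi>_def)
  moreover have "\<rho> + real k * s < r"
    using r by (simp add: \<rho>_def s_def field_simps)
  ultimately have "C2c_disc r \<psi>"
    by (intro C2c_disc_if_csupp) (auto simp: \<psi>_def intro: C2_fin_diff C2_bump)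
  moreover have "\<exists>x. \<psi> x \<noteq> 0"
    unfolding \<psi>_def using d s
    by (intro fin_diff_nonzero[OF finite_lessThan csupp_bump[OF \<rho>] bump_at_0[OF \<rho>]]) force
  moreover have "\<forall>i<k. \<forall>x. ray_transform (d i) \<psi> x + ray_transform (- d i) \<psi> x = 0"
  proof (intro allI impI)
    fix i x assume i: "i < k"
    define \<phi> where "\<phi> = fin_diff ({..<k} - {i}) (\<lambda>i. s *\<^sub>R d i) (bump \<rho>)"
    have "\<psi> = (\<lambda>y. \<phi> y - \<phi> (y + s *\<^sub>R d i))"
      using fin_diff_remove[of "{..<k}" i _ "bump \<rho>"] i
      by (auto simp: fun_eq_iff \<psi>_def \<phi>_def fin_diff_diff_shift)
    moreover have "csupp (\<rho> + (\<Sum>j\<in>{..<k} - {i}. norm (s *\<^sub>R d j))) \<phi>"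
      unfolding \<phi>_def by (rule csupp_fin_diff[OF csupp_bump[OF \<rho>]]) simp
    ultimately show "ray_transform (d i) \<psi> x + ray_transform (- d i) \<psi> x = 0"
      using ray_transform_add_opposite_diff_shift[of _ \<phi> "d i" s x] d i by simp
  qed
  ultimately show thesis using that by blast
qed

lemma sum_lessThan_double_permute:
  fixes p :: "nat \<Rightarrow> nat"
  assumes p: "p permutes {..<2 * k}"
  shows "(\<Sum>i<2 * k. F i) = (\<Sum>i<k. F (p i) + F (p (k + i)))"
proof -
  have "{..<2 * k} = {..<k} \<union> (\<lambda>i. k + i) ` {..<k}"
  proof (intro equalityI subsetI)
    fix x assume "x \<in> {..<2 * k}"
    then show "x \<in> {..<k} \<union> (\<lambda>i. k + i) ` {..<k}"
      by (cases "x < k") (auto intro!: image_eqI[of _ _ "x - k"])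
  qed auto
  moreover have "{..<k} \<inter> (\<lambda>i. k + i) ` {..<k} = {}" by auto
  ultimately have "(\<Sum>i<2 * k. F (p i)) = (\<Sum>i<k. F (p i)) + (\<Sum>i<k. F (p (k + i)))"
    by (simp add: sum.union_disjoint sum.reindex)
  then show ?thesis using sum.permute[OF p, of F] by (simp add: sum.distrib o_def)
qed

lemma star_transform_line_integral_free:
  fixes k :: nat
  assumes p: "p permutes {..<2 * k}"
    and pairs: "\<forall>i<k. g (p i) = - g (p (k + i)) \<and> c (p i) = - c (p (k + i))"
    and lines: "\<And>i x. i < k \<Longrightarrow> ray_transform (g (p i)) \<psi> x + ray_transform (- g (p i)) \<psi> x = 0"
  shows "star_transform (2 * k) g c (\<lambda>y. \<psi> y *\<^sub>R e) = (\<lambda>x. 0)"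
proof -
  have pair_sum: "(\<Sum>i<2 * k. c i * (ray_transform (g i) \<psi> x * \<beta> (g i))) = 0"
    if odd: "\<And>v. \<beta> (- v) = - \<beta> v" for \<beta> x
  proof -
    have "c (p i) * (ray_transform (g (p i)) \<psi> x * \<beta> (g (p i)))
        + c (p (k + i)) * (ray_transform (g (p (k + i))) \<psi> x * \<beta> (g (p (k + i)))) = 0" if "i < k" for i
    proof -
      have "g (p (k + i)) = - g (p i)" "c (p (k + i)) = - c (p i)" using pairs that by auto
      then have "c (p i) * (ray_transform (g (p i)) \<psi> x * \<beta> (g (p i)))
          + c (p (k + i)) * (ray_transform (g (p (k + i))) \<psi> x * \<beta> (g (p (k + i))))
          = c (p i) * \<beta> (g (p i)) * (ray_transform (g (p i)) \<psi> x + ray_transform (- g (p i)) \<psi> x)"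
        using odd by (simp add: algebra_simps)
      then show ?thesis using lines[OF that, of x] by simp
    qed
    then show ?thesis by (simp add: sum_lessThan_double_permute[OF p])
  qed
  have ray_scale: "ray_transform v (\<lambda>y. \<psi> y * a) x = ray_transform v \<psi> x * a" for v a x
    by (simp add: ray_transform_def)
  show ?thesis
    using pair_sum[of "\<lambda>v. e \<bullet> v"] pair_sum[of "\<lambda>v. e \<bullet> perp v"]
    by (simp add: fun_eq_iff vec2_eq_iff star_transform_nth ray_scale linear_neg[OF linear_perp])
qed

theorem star_not_invertible_if_symmetric:
  assumes r: "r > 0" and units: "\<forall>i<m. norm (g i) = 1" and sym: "star_symmetric m g c"
  shows "\<not> star_invertible r m g c"
proof
  assume inv: "star_invertible r m g c"
  obtain k p where m: "m = 2 * k" and p: "p permutes {..<m}"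
    and pairs: "\<forall>i<k. g (p i) = - g (p (k + i)) \<and> c (p i) = - c (p (k + i))"
    using sym unfolding star_symmetric_def by blast
  have "\<forall>i<k. norm (g (p i)) = 1"
    using units permutes_in_image[OF p] m by simp
  then obtain \<psi> where \<psi>: "C2c_disc r \<psi>" and nonzero: "\<exists>x. \<psi> x \<noteq> 0"
    and lines: "\<forall>i<k. \<forall>x. ray_transform (g (p i)) \<psi> x + ray_transform (- g (p i)) \<psi> x = 0"
    by (rule exists_line_integral_free[OF r])
  define f :: "real^2 \<Rightarrow> real^2" where "f y = \<psi> y *\<^sub>R axis 1 1" for y
  have f1: "(\<lambda>x. f x $ 1) = \<psi>" and f2: "(\<lambda>x. f x $ 2) = (\<lambda>x. 0)"
    by (simp_all add: f_def fun_eq_iff axis_def)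
  moreover have zero: "C2c_disc r (\<lambda>x. 0)"
    using C2c_disc_if_csupp[OF C2_zero csupp_zero_fun r] by simp
  ultimately have adm: "admissible_field r f" "admissible_field r (\<lambda>x. 0)"
    unfolding admissible_field_def forall_2 using \<psi> by simp_all
  have "star_transform m g c f = (\<lambda>x. 0)"
    unfolding f_def m using lines by (intro star_transform_line_integral_free[OF p[unfolded m] pairs]) auto
  moreover have "star_transform m g c (\<lambda>x. 0) = (\<lambda>x. 0)"
    by (simp add: fun_eq_iff vec2_eq_iff star_transform_nth ray_transform_def)
  ultimately have "f = (\<lambda>x. 0)"
    using inv[unfolded star_invertible_def, rule_format, OF adm] by simp
  then have "\<psi> = (\<lambda>x. 0)" using f1 by simp
  then show False using nonzero by simp
qed

theorem theorem8:
  fixes r :: real and m :: nat and g :: "nat \<Rightarrow> real^2" and c :: "nat \<Rightarrow> real"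
  assumes "r > 0" and "m \<ge> 1"
    and "\<forall>i<m. norm (g i) = 1"
    and "inj_on g {..<m}"
    and "\<forall>i<m. c i \<noteq> 0"
  shows "star_invertible r m g c \<longleftrightarrow> \<not> star_symmetric m g c"
  using star_invertible_if_not_symmetric[OF assms] star_not_invertible_if_symmetric[OF assms(1,3)] by blast

end
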